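(* Let $K$ be a field, $\Lambda=(KQ/\langle I\rangle,|\cdot|)$ a graded pinched gentle algebra, $(\alpha,\beta)$ an acyclic graded Kronecker of $\Lambda$ with source $1$ and target $2$, $\mu\in K^*$, and $B=(P_2[|\alpha|]\oplus P_1[1],\partial=\begin{pmatrix}0&\alpha+\mu\beta\\0&0\end{pmatrix})\in\mathcal{P}(\Lambda)^{pre-tr}$. Let $\mathcal{A}$ be the full DG subcategory of $\mathcal{P}(\Lambda)^{pre-tr}$ on $Q_0\cup\{B\}$. Then for all $i\in Q_0\setminus\{1,2\}$, $H^*\mathrm{Hom}_{\mathcal{A}}(P_i,B)\simeq0\simeq H^*\mathrm{Hom}_{\mathcal{A}}(B,P_i)$.
   Context: Paths in $Q$ are composed right to left; $e_a$ trivial path, $P_a=e_a\Lambda$. Graded pinched gentle: $Q_1=Q_1^g\sqcup Q_1^p$, $I=I^g\sqcup I^p$, $(Q^g,\langle I^g\rangle)$ gentle (each vertex at most two incoming/outgoing arrows; $I^g$ paths of length two with, for each arrow $\alpha$, at most one arrow $\beta$ with $\alpha\beta$ a path in $I^g$, at most one $\gamma$ with $\gamma\alpha$ in $I^g$, at most one $\beta'$ with $\alpha\beta'$ a path not in $I^g$, at most one $\gamma'$ with $\gamma'\alpha$ not in $I^g$), $Q_1^p$ degree-zero loops at distinct vertices, and for each $v$ with loop $\gamma_v$, arrows $\alpha_v^\pm,\beta_v^\pm$ of $Q^g$ at $v$ with $\beta_v^+\alpha_v^-,\alpha_v^+\beta_v^-\in I^g$ give $I^p=\{\beta_v^+(\gamma_v+e_v),(\gamma_v+e_v)\beta_v^-,\alpha_v^+(\gamma_v-e_v),(\gamma_v-e_v)\alpha_v^-\}$.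 Graded Kronecker: arrows $\alpha,\beta$ of $Q^g$, not loops, common source $1$, common target $2$, $|\alpha|=|\beta|$, no loop of $Q_1^p$ at $1$ or $2$; acyclic: $\alpha,\beta$ not on an oriented cycle of $(Q^g,I^g)$. $\mathcal{P}(\Lambda)$ is the DG category with objects $Q_0$ (vertex $i$ written $P_i$), $\mathrm{Hom}(i,j)=e_j\Lambda e_i$ graded, zero differential. $\mathcal{P}(\Lambda)^{pre-tr}$ (one-sided twisted complexes): objects $(\bigoplus_iC_i[r_i],\partial)$ with $\partial$ strictly upper triangular, entries $\partial_{ij}\in\mathrm{Hom}(C_j,C_i)$ of degree $r_i-r_j+1$, $d_{naive}\partial+\partial^2=0$; morphisms are matrices of morphisms, an entry $b:C_l\to C'_k$ having degree $|b|+r_l-r'_k$; composition by matrix multiplication; $df=d_{naive}f+\partial'f-(-1)^lf\partial$ for $f$ of degree $l$. Each $P_i$ is the twisted complex $(P_i[0],0)$. *)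

theory Defs
  imports Main
begin

record ('v,'a) quiver =
  verts :: "'v set"
  arrs :: "'a set"
  src :: "'a \<Rightarrow> 'v"
  tgt :: "'a \<Rightarrow> 'v"

text \<open>A path is a pair (start vertex, list of arrows).  Paths are composed right to left:
  the list [a1, ..., an] denotes the path a1 a2 ... an, i.e. an is traversed first.
  The trivial path e_v is (v, []).\<close>
type_synonym ('v,'a) path = "'v \<times> 'a list"

definition arrow_chain :: "('v,'a) quiver \<Rightarrow> 'a list \<Rightarrow> bool" where
  "arrow_chain Q xs \<longleftrightarrow> (\<forall>k. Suc k < length xs \<longrightarrow> src Q (xs ! k) = tgt Q (xs ! Suc k))"

definition is_path :: "('v,'a) quiver \<Rightarrow> 'a set \<Rightarrow> ('v,'a) path \<Rightarrow> bool" where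
  "is_path Q A p \<longleftrightarrow> fst p \<in> verts Q \<and> set (snd p) \<subseteq> A \<and> arrow_chain Q (snd p)
     \<and> (snd p \<noteq> [] \<longrightarrow> src Q (last (snd p)) = fst p)"

definition ptgt :: "('v,'a) quiver \<Rightarrow> ('v,'a) path \<Rightarrow> 'v" where
  "ptgt Q p = (if snd p = [] then fst p else tgt Q (hd (snd p)))"

text \<open>p q = "first q, then p"\<close>
definition pcomp :: "('v,'a) path \<Rightarrow> ('v,'a) path \<Rightarrow> ('v,'a) path" where
  "pcomp p q = (fst q, snd p @ snd q)"

definition composable :: "('v,'a) quiver \<Rightarrow> ('v,'a) path \<Rightarrow> ('v,'a) path \<Rightarrow> bool" where
  "composable Q p q \<longleftrightarrow> fst p = ptgt Q q"

definition pdeg :: "('a \<Rightarrow> int) \<Rightarrow> ('v,'a) path \<Rightarrow> int" where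
  "pdeg deg p = sum_list (map deg (snd p))"

type_synonym ('v,'a,'k) kq = "('v,'a) path \<Rightarrow> 'k"

definition supp :: "('v,'a,'k::zero) kq \<Rightarrow> ('v,'a) path set" where
  "supp f = {p. f p \<noteq> 0}"

definition kzero :: "('v,'a,'k::zero) kq" where
  "kzero = (\<lambda>_. 0)"

definition delta :: "('v,'a) path \<Rightarrow> ('v,'a,'k::{zero,one}) kq" where
  "delta p = (\<lambda>r. if r = p then 1 else 0)"

definition kadd :: "('v,'a,'k::plus) kq \<Rightarrow> ('v,'a,'k) kq \<Rightarrow> ('v,'a,'k) kq" where
  "kadd f g = (\<lambda>r. f r + g r)"

definition ksub :: "('v,'a,'k::minus) kq \<Rightarrow> ('v,'a,'k) kq \<Rightarrow> ('v,'a,'k) kq" where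
  "ksub f g = (\<lambda>r. f r - g r)"

definition ksmult :: "'k::times \<Rightarrow> ('v,'a,'k) kq \<Rightarrow> ('v,'a,'k) kq" where
  "ksmult c f = (\<lambda>r. c * f r)"

definition kmul :: "('v,'a) quiver \<Rightarrow> ('v,'a,'k::field) kq \<Rightarrow> ('v,'a,'k) kq \<Rightarrow> ('v,'a,'k) kq" where
  "kmul Q f g = (\<lambda>r. \<Sum>pq \<in> {(p,q). p \<in> supp f \<and> q \<in> supp g \<and> composable Q p q \<and> pcomp p q = r}.
                        f (fst pq) * g (snd pq))"

inductive_set ideal_gen :: "('v,'a) quiver \<Rightarrow> ('v,'a,'k::field) kq set \<Rightarrow> ('v,'a,'k) kq set"
  for Q R where
  ig_zero: "kzero \<in> ideal_gen Q R"
| ig_gen: "x \<in> R \<Longrightarrow> x \<in> ideal_gen Q R"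
| ig_add: "x \<in> ideal_gen Q R \<Longrightarrow> y \<in> ideal_gen Q R \<Longrightarrow> kadd x y \<in> ideal_gen Q R"
| ig_smult: "x \<in> ideal_gen Q R \<Longrightarrow> ksmult c x \<in> ideal_gen Q R"
| ig_left: "x \<in> ideal_gen Q R \<Longrightarrow> is_path Q (arrs Q) p \<Longrightarrow> kmul Q (delta p) x \<in> ideal_gen Q R"
| ig_right: "x \<in> ideal_gen Q R \<Longrightarrow> is_path Q (arrs Q) p \<Longrightarrow> kmul Q x (delta p) \<in> ideal_gen Q R"

definition gentle :: "('v,'a) quiver \<Rightarrow> 'a set \<Rightarrow> ('v,'a) path set \<Rightarrow> bool" where
  "gentle Q Q1g Ig \<longleftrightarrow>
     (\<forall>v \<in> verts Q. card {a \<in> Q1g. tgt Q a = v} \<le> 2 \<and> card {a \<in> Q1g. src Q a = v} \<le> 2)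
   \<and> (\<forall>p \<in> Ig. is_path Q Q1g p \<and> length (snd p) = 2)
   \<and> (\<forall>a \<in> Q1g.
        card {b \<in> Q1g. src Q a = tgt Q b \<and> (src Q b, [a, b]) \<in> Ig} \<le> 1
      \<and> card {c \<in> Q1g. src Q c = tgt Q a \<and> (src Q a, [c, a]) \<in> Ig} \<le> 1
      \<and> card {b \<in> Q1g. src Q a = tgt Q b \<and> (src Q b, [a, b]) \<notin> Ig} \<le> 1
      \<and> card {c \<in> Q1g. src Q c = tgt Q a \<and> (src Q a, [c, a]) \<notin> Ig} \<le> 1)"

text \<open>For a pinched loop g at v = src g the data ap g, am g, bp g, bm g are the arrows
  alpha_v^+, alpha_v^-, beta_v^+, beta_v^- (plus = outgoing, minus = incoming).\<close>
definition pinched_data ::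
  "('v,'a) quiver \<Rightarrow> 'a set \<Rightarrow> ('v,'a) path set \<Rightarrow> 'a \<Rightarrow> 'a \<Rightarrow> 'a \<Rightarrow> 'a \<Rightarrow> 'a \<Rightarrow> bool" where
  "pinched_data Q Q1g Ig g ap am bp bm \<longleftrightarrow>
     ap \<in> Q1g \<and> am \<in> Q1g \<and> bp \<in> Q1g \<and> bm \<in> Q1g
   \<and> src Q ap = src Q g \<and> src Q bp = src Q g \<and> tgt Q am = src Q g \<and> tgt Q bm = src Q g
   \<and> (src Q am, [bp, am]) \<in> Ig \<and> (src Q bm, [ap, bm]) \<in> Ig"

definition graded_pinched_gentle ::
  "('v,'a) quiver \<Rightarrow> 'a set \<Rightarrow> 'a set \<Rightarrow> ('v,'a) path set \<Rightarrow> ('a \<Rightarrow> int)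
   \<Rightarrow> ('a \<Rightarrow> 'a) \<Rightarrow> ('a \<Rightarrow> 'a) \<Rightarrow> ('a \<Rightarrow> 'a) \<Rightarrow> ('a \<Rightarrow> 'a) \<Rightarrow> bool" where
  "graded_pinched_gentle Q Q1g Q1p Ig deg ap am bp bm \<longleftrightarrow>
     finite (verts Q) \<and> finite (arrs Q)
   \<and> (\<forall>a \<in> arrs Q. src Q a \<in> verts Q \<and> tgt Q a \<in> verts Q)
   \<and> Q1g \<inter> Q1p = {} \<and> Q1g \<union> Q1p = arrs Q
   \<and> gentle Q Q1g Ig
   \<and> (\<forall>g \<in> Q1p. src Q g = tgt Q g \<and> deg g = 0)
   \<and> inj_on (src Q) Q1p
   \<and> (\<forall>g \<in> Q1p. pinched_data Q Q1g Ig g (ap g) (am g) (bp g) (bm g))"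

definition pinched_rels ::
  "('v,'a) quiver \<Rightarrow> 'a set \<Rightarrow> ('v,'a) path set
   \<Rightarrow> ('a \<Rightarrow> 'a) \<Rightarrow> ('a \<Rightarrow> 'a) \<Rightarrow> ('a \<Rightarrow> 'a) \<Rightarrow> ('a \<Rightarrow> 'a) \<Rightarrow> ('v,'a,'k::field) kq set" where
  "pinched_rels Q Q1p Ig ap am bp bm =
     delta ` Ig \<union>
     (\<Union>g \<in> Q1p. let v = src Q g in
        { kadd (delta (v, [bp g, g])) (delta (v, [bp g])),
          kadd (delta (src Q (bm g), [g, bm g])) (delta (src Q (bm g), [bm g])),
          ksub (delta (v, [ap g, g])) (delta (v, [ap g])),
          ksub (delta (src Q (am g), [g, am g])) (delta (src Q (am g), [am g])) })"

definition Lambda_ideal ::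
  "('v,'a) quiver \<Rightarrow> 'a set \<Rightarrow> ('v,'a) path set
   \<Rightarrow> ('a \<Rightarrow> 'a) \<Rightarrow> ('a \<Rightarrow> 'a) \<Rightarrow> ('a \<Rightarrow> 'a) \<Rightarrow> ('a \<Rightarrow> 'a) \<Rightarrow> ('v,'a,'k::field) kq set" where
  "Lambda_ideal Q Q1p Ig ap am bp bm = ideal_gen Q (pinched_rels Q Q1p Ig ap am bp bm)"

definition bound_cycle :: "('v,'a) quiver \<Rightarrow> 'a set \<Rightarrow> ('v,'a) path set \<Rightarrow> ('v,'a) path \<Rightarrow> bool" where
  "bound_cycle Q Q1g Ig c \<longleftrightarrow> is_path Q Q1g c \<and> snd c \<noteq> [] \<and> ptgt Q c = fst c
     \<and> (\<forall>k. Suc k < length (snd c) \<longrightarrow>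
            (src Q (snd c ! Suc k), [snd c ! k, snd c ! Suc k]) \<notin> Ig)"

definition acyclic_graded_kronecker ::
  "('v,'a) quiver \<Rightarrow> 'a set \<Rightarrow> 'a set \<Rightarrow> ('v,'a) path set \<Rightarrow> ('a \<Rightarrow> int)
   \<Rightarrow> 'a \<Rightarrow> 'a \<Rightarrow> 'v \<Rightarrow> 'v \<Rightarrow> bool" where
  "acyclic_graded_kronecker Q Q1g Q1p Ig deg \<alpha> \<beta> v1 v2 \<longleftrightarrow>
     \<alpha> \<in> Q1g \<and> \<beta> \<in> Q1g \<and> \<alpha> \<noteq> \<beta>
   \<and> src Q \<alpha> \<noteq> tgt Q \<alpha> \<and> src Q \<beta> \<noteq> tgt Q \<beta>
   \<and> src Q \<alpha> = v1 \<and> src Q \<beta> = v1 \<and> tgt Q \<alpha> = v2 \<and> tgt Q \<beta> = v2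
   \<and> deg \<alpha> = deg \<beta>
   \<and> (\<forall>g \<in> Q1p. src Q g \<noteq> v1 \<and> src Q g \<noteq> v2)
   \<and> \<not> (\<exists>c. bound_cycle Q Q1g Ig c \<and> (\<alpha> \<in> set (snd c) \<or> \<beta> \<in> set (snd c)))"

text \<open>A twisted complex: list of summands (vertex i, shift r) meaning P_i[r], and the
  matrix of the differential (entries as representatives in KQ of elements of Lambda).\<close>
type_synonym ('v,'a,'k) twc = "('v \<times> int) list \<times> (nat \<Rightarrow> nat \<Rightarrow> ('v,'a,'k) kq)"

text \<open>f represents a homogeneous element of e_j Lambda e_i of degree n.\<close>
definition hom_elt :: "('v,'a) quiver \<Rightarrow> ('a \<Rightarrow> int) \<Rightarrow> 'v \<Rightarrow> 'v \<Rightarrow> int \<Rightarrow> ('v,'a,'k::field) kq \<Rightarrow> bool" where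
  "hom_elt Q deg i j n f \<longleftrightarrow> finite (supp f) \<and>
     (\<forall>p \<in> supp f. is_path Q (arrs Q) p \<and> fst p = i \<and> ptgt Q p = j \<and> pdeg deg p = n)"

text \<open>Morphisms X \<rightarrow> Y of degree n: entry (k,l) : C_l \<rightarrow> C'_k with |b| + r_l - r'_k = n.\<close>
definition is_mor :: "('v,'a) quiver \<Rightarrow> ('a \<Rightarrow> int) \<Rightarrow> int \<Rightarrow> ('v,'a,'k::field) twc \<Rightarrow> ('v,'a,'k) twc
   \<Rightarrow> (nat \<Rightarrow> nat \<Rightarrow> ('v,'a,'k) kq) \<Rightarrow> bool" where
  "is_mor Q deg n X Y f \<longleftrightarrow>
     (\<forall>k < length (fst Y). \<forall>l < length (fst X).
        hom_elt Q deg (fst (fst X ! l)) (fst (fst Y ! k)) (n - snd (fst X ! l) + snd (fst Y ! k)) (f k l))"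

text \<open>Equality of morphisms in Lambda (entrywise modulo the ideal J).\<close>
definition mor_eq :: "('v,'a,'k::field) kq set \<Rightarrow> ('v,'a,'k) twc \<Rightarrow> ('v,'a,'k) twc
   \<Rightarrow> (nat \<Rightarrow> nat \<Rightarrow> ('v,'a,'k) kq) \<Rightarrow> (nat \<Rightarrow> nat \<Rightarrow> ('v,'a,'k) kq) \<Rightarrow> bool" where
  "mor_eq J X Y f g \<longleftrightarrow>
     (\<forall>k < length (fst Y). \<forall>l < length (fst X). ksub (f k l) (g k l) \<in> J)"

text \<open>Differential d f = d_naive f + \<partial>' f - (-1)^n f \<partial>; here d_naive = 0 since
  Lambda has zero differential.\<close>
definition dmor :: "('v,'a) quiver \<Rightarrow> int \<Rightarrow> ('v,'a,'k::field) twc \<Rightarrow> ('v,'a,'k) twc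
   \<Rightarrow> (nat \<Rightarrow> nat \<Rightarrow> ('v,'a,'k) kq) \<Rightarrow> (nat \<Rightarrow> nat \<Rightarrow> ('v,'a,'k) kq)" where
  "dmor Q n X Y f = (\<lambda>k l r.
      (\<Sum>m < length (fst Y). kmul Q (snd Y k m) (f m l) r)
      - (-1) ^ nat \<bar>n\<bar> * (\<Sum>m < length (fst X). kmul Q (f k m) (snd X m l) r))"

text \<open>H^* Hom(X,Y) = 0: in every degree, every cocycle is a coboundary.\<close>
definition hom_acyclic :: "('v,'a) quiver \<Rightarrow> ('a \<Rightarrow> int) \<Rightarrow> ('v,'a,'k::field) kq set
   \<Rightarrow> ('v,'a,'k) twc \<Rightarrow> ('v,'a,'k) twc \<Rightarrow> bool" where
  "hom_acyclic Q deg J X Y \<longleftrightarrow>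
     (\<forall>n f. is_mor Q deg n X Y f \<and> mor_eq J X Y (dmor Q n X Y f) (\<lambda>_ _. kzero) \<longrightarrow>
        (\<exists>g. is_mor Q deg (n - 1) X Y g \<and> mor_eq J X Y (dmor Q (n - 1) X Y g) f))"

definition Pobj :: "'v \<Rightarrow> ('v,'a,'k::field) twc" where
  "Pobj i = ([(i, 0)], \<lambda>_ _. kzero)"

definition Bobj :: "('a \<Rightarrow> int) \<Rightarrow> 'a \<Rightarrow> 'a \<Rightarrow> 'k::field \<Rightarrow> 'v \<Rightarrow> 'v \<Rightarrow> ('v,'a,'k) twc" where
  "Bobj deg \<alpha> \<beta> \<mu> v1 v2 =
     ([(v2, deg \<alpha>), (v1, 1)],
      \<lambda>k l. if k = 0 \<and> l = 1 then kadd (delta (v1, [\<alpha>])) (ksmult \<mu> (delta (v1, [\<beta>]))) else kzero)"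

end

(*
  The differential of B has a single nonzero entry A = alpha + mu beta, so Hom(P_i, B) is,
  up to shift and sign, the cone of left multiplication by A from e_1 Lambda e_i to
  e_2 Lambda e_i, and Hom(B, P_i) the cone of right multiplication by A from e_i Lambda e_2
  to e_i Lambda e_1.  Both complexes are acyclic once these multiplications are bijective.

  No pinched loop sits at 1 or 2, so by gentleness alpha and beta are the only arrows into 2
  and out of 1, and for every arrow c into 1 exactly one x in {alpha, beta} makes x c a
  nonzero path.  As i is neither 1 nor 2, every path from i to 2 reads x c t with c an arrow
  into 1.  Reading off the coefficient of x c t for that x, divided by the coefficient of x
  in A, is a left inverse of left multiplication by A that maps the ideal of relations into
  itself; this gives injectivity.  Multiplying back by A recovers f up to paths starting with
  a relation, which gives surjectivity.  The right-hand side is symmetric.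
*)

theory Submission
  imports Defs
begin

lemma arrow_chain_ConsD: "arrow_chain Q (x # t) \<Longrightarrow> arrow_chain Q t"
  unfolding arrow_chain_def by (metis Suc_less_eq length_Cons nth_Cons_Suc)

lemma arrow_chain_appendD: "arrow_chain Q (xs @ ys) \<Longrightarrow> arrow_chain Q xs"
  unfolding arrow_chain_def by (metis Suc_lessD less_le_trans nth_append length_append le_add1)

lemma arrow_chain_Cons_Cons: "arrow_chain Q (x # c # t) \<Longrightarrow> src Q x = tgt Q c"
  unfolding arrow_chain_def by (erule allE[of _ 0]) simp

lemma arrow_chain_middle: "arrow_chain Q (t @ [a, b] @ u) \<Longrightarrow> src Q a = tgt Q b"
  unfolding arrow_chain_def by (erule allE[of _ "length t"]) (simp add: nth_append)

lemma is_path_ConsD: "is_path Q A (w, x # t) \<Longrightarrow> is_path Q A (w, t)"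
  unfolding is_path_def using arrow_chain_ConsD by (cases t) auto

text \<open>If \<open>r = p q\<close> then \<open>left_cofactor p r = q\<close> and \<open>right_cofactor Q q r = p\<close>; the predicates
  \<open>is_left_factor\<close> and \<open>is_right_factor\<close> say whether such a factorisation exists.\<close>

definition left_cofactor :: "('v,'a) path \<Rightarrow> ('v,'a) path \<Rightarrow> ('v,'a) path" where
  "left_cofactor p r = (fst r, drop (length (snd p)) (snd r))"

definition is_left_factor :: "('v,'a) quiver \<Rightarrow> ('v,'a) path \<Rightarrow> ('v,'a) path \<Rightarrow> bool" where
  "is_left_factor Q p r \<longleftrightarrow>
     snd r = snd p @ snd (left_cofactor p r) \<and> fst p = ptgt Q (left_cofactor p r)"

definition right_cofactor :: "('v,'a) quiver \<Rightarrow> ('v,'a) path \<Rightarrow> ('v,'a) path \<Rightarrow> ('v,'a) path" where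
  "right_cofactor Q q r = (ptgt Q q, take (length (snd r) - length (snd q)) (snd r))"

definition is_right_factor :: "('v,'a) path \<Rightarrow> ('v,'a) path \<Rightarrow> bool" where
  "is_right_factor q r \<longleftrightarrow> fst r = fst q \<and> length (snd q) \<le> length (snd r)
     \<and> drop (length (snd r) - length (snd q)) (snd r) = snd q"

lemma is_left_factor_trivial [simp]: "is_left_factor Q (u, []) r \<longleftrightarrow> u = ptgt Q r"
  and left_cofactor_trivial [simp]: "left_cofactor (u, []) r = r"
  by (simp_all add: is_left_factor_def left_cofactor_def)

lemma is_left_factor_Cons_Nil [simp]: "\<not> is_left_factor Q (u, a # ps) (w, [])"
  by (simp add: is_left_factor_def left_cofactor_def)

lemma is_left_factor_Cons_Cons [simp]:
  "is_left_factor Q (u, a # ps) (w, c # l) \<longleftrightarrow> a = c \<and> is_left_factor Q (u, ps) (w, l)"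
  and left_cofactor_Cons_Cons [simp]: "left_cofactor (u, a # ps) (w, c # l) = left_cofactor (u, ps) (w, l)"
  by (auto simp: is_left_factor_def left_cofactor_def)

lemma is_right_factor_trivial [simp]: "is_right_factor (u, []) r \<longleftrightarrow> fst r = u"
  and right_cofactor_trivial [simp]: "right_cofactor Q (u, []) r = (u, snd r)"
  by (simp_all add: is_right_factor_def right_cofactor_def ptgt_def)

lemma is_right_factor_snoc_snoc [simp]:
  "is_right_factor (u, qs @ [b]) (w, l @ [c]) \<longleftrightarrow> b = c \<and> is_right_factor (u, qs) (w, l)"
  by (auto simp: is_right_factor_def Suc_diff_le)

lemma right_cofactor_snoc_snoc [simp]:
  "right_cofactor Q (u, qs @ [b]) (w, l @ [c]) = (ptgt Q (u, qs @ [b]), snd (right_cofactor Q (u, qs) (w, l)))"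
  by (simp add: right_cofactor_def)

lemma is_right_factor_snoc2_snoc2 [simp]:
  "is_right_factor (u, qs @ [b, a]) (w, l @ [c, d]) \<longleftrightarrow> b = c \<and> a = d \<and> is_right_factor (u, qs) (w, l)"
  and right_cofactor_snoc2_snoc2 [simp]:
  "right_cofactor Q (u, qs @ [b, a]) (w, l @ [c, d]) =
     (ptgt Q (u, qs @ [b, a]), snd (right_cofactor Q (u, qs) (w, l)))"
  using is_right_factor_snoc_snoc[of u "qs @ [b]" a w "l @ [c]" d]
    right_cofactor_snoc_snoc[of Q u "qs @ [b]" a w "l @ [c]" d] by auto

lemma is_right_factor_arrow_snoc2 [simp]:
  "is_right_factor (u, [a]) (w, l @ [c, d]) \<longleftrightarrow> a = d \<and> w = u"
  and right_cofactor_arrow_snoc2 [simp]: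
  "right_cofactor Q (u, [a]) (w, l @ [c, d]) = (tgt Q a, l @ [c])"
  using is_right_factor_snoc_snoc[of u "[]" a w "l @ [c]" d]
    right_cofactor_snoc_snoc[of Q u "[]" a w "l @ [c]" d] by (auto simp: ptgt_def)

lemma kmul_eq_sum_left_factors:
  assumes "finite S" "supp f \<subseteq> S"
  shows "kmul Q f h r = (\<Sum>p\<in>S. f p * (if is_left_factor Q p r then h (left_cofactor p r) else 0))"
proof -
  let ?P = "{(p,q). p \<in> supp f \<and> q \<in> supp h \<and> composable Q p q \<and> pcomp p q = r}"
  let ?T = "{p \<in> supp f. is_left_factor Q p r \<and> left_cofactor p r \<in> supp h}"
  have eq: "?P = (\<lambda>p. (p, left_cofactor p r)) ` ?T"
  proof (rule set_eqI, rule iffI)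
    fix x assume "x \<in> ?P"
    then obtain p q where x: "x = (p,q)" "p \<in> supp f" "q \<in> supp h" "composable Q p q" "pcomp p q = r"
      by blast
    have "q = left_cofactor p r" using x(5) unfolding pcomp_def left_cofactor_def by (cases q, auto)
    moreover have "is_left_factor Q p r" using x(4,5) calculation
      unfolding is_left_factor_def composable_def pcomp_def by (cases r) auto
    ultimately show "x \<in> (\<lambda>p. (p, left_cofactor p r)) ` ?T" using x by auto
  next
    fix x assume "x \<in> (\<lambda>p. (p, left_cofactor p r)) ` ?T"
    then obtain p where p: "x = (p, left_cofactor p r)" "p \<in> supp f" "is_left_factor Q p r"
        "left_cofactor p r \<in> supp h" by blast
    have "pcomp p (left_cofactor p r) = r" using p(3) unfolding is_left_factor_def pcomp_def
      by (cases r) (auto simp: left_cofactor_def)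
    then show "x \<in> ?P" using p unfolding is_left_factor_def composable_def by auto
  qed
  have "kmul Q f h r = (\<Sum>pq\<in>?P. f (fst pq) * h (snd pq))" by (simp add: kmul_def)
  also have "\<dots> = (\<Sum>p\<in>?T. f p * h (left_cofactor p r))"
    by (subst eq, subst sum.reindex) (auto simp: inj_on_def)
  also have "\<dots> = (\<Sum>p\<in>S. f p * (if is_left_factor Q p r then h (left_cofactor p r) else 0))"
    using assms by (intro sum.mono_neutral_cong_left) (auto simp: supp_def)
  finally show ?thesis .
qed

lemma kmul_eq_sum_right_factors:
  assumes "finite S" "supp g \<subseteq> S"
  shows "kmul Q h g r = (\<Sum>q\<in>S. (if is_right_factor q r then h (right_cofactor Q q r) else 0) * g q)"
proof -
  let ?P = "{(p,q). p \<in> supp h \<and> q \<in> supp g \<and> composable Q p q \<and> pcomp p q = r}"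
  let ?T = "{q \<in> supp g. is_right_factor q r \<and> right_cofactor Q q r \<in> supp h}"
  have eq: "?P = (\<lambda>q. (right_cofactor Q q r, q)) ` ?T"
  proof (rule set_eqI, rule iffI)
    fix x assume "x \<in> ?P"
    then obtain p q where x: "x = (p,q)" "p \<in> supp h" "q \<in> supp g" "composable Q p q" "pcomp p q = r"
      by blast
    have "p = right_cofactor Q q r" using x(4,5)
      unfolding pcomp_def right_cofactor_def composable_def by (cases p, auto)
    moreover have "is_right_factor q r" using x(4,5)
      unfolding is_right_factor_def composable_def pcomp_def by auto
    ultimately show "x \<in> (\<lambda>q. (right_cofactor Q q r, q)) ` ?T" using x by auto
  next
    fix x assume "x \<in> (\<lambda>q. (right_cofactor Q q r, q)) ` ?T"
    then obtain q where q: "x = (right_cofactor Q q r, q)" "q \<in> supp g" "is_right_factor q r"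
        "right_cofactor Q q r \<in> supp h" by blast
    have "pcomp (right_cofactor Q q r) q = r" using q(3)
      unfolding is_right_factor_def pcomp_def right_cofactor_def
      by (cases r) (auto, metis append_take_drop_id)
    then show "x \<in> ?P" using q unfolding composable_def by (auto simp: right_cofactor_def)
  qed
  have "kmul Q h g r = (\<Sum>pq\<in>?P. h (fst pq) * g (snd pq))" by (simp add: kmul_def)
  also have "\<dots> = (\<Sum>q\<in>?T. h (right_cofactor Q q r) * g q)"
    by (subst eq, subst sum.reindex) (auto simp: inj_on_def)
  also have "\<dots> = (\<Sum>q\<in>S. (if is_right_factor q r then h (right_cofactor Q q r) else 0) * g q)"
    using assms by (intro sum.mono_neutral_cong_left) (auto simp: supp_def)
  finally show ?thesis .
qed

lemma supp_delta [simp]: "supp (delta p :: ('v,'a,'k::field) kq) = {p}"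
  by (auto simp: supp_def delta_def)

lemma kmul_delta_left:
  "kmul Q (delta p) h r = (if is_left_factor Q p r then h (left_cofactor p r) else (0::'k::field))"
  by (subst kmul_eq_sum_left_factors[of "{p}"]) (simp_all, simp add: delta_def)

lemma kmul_delta_right:
  "kmul Q h (delta q) r = (if is_right_factor q r then h (right_cofactor Q q r) else (0::'k::field))"
  by (subst kmul_eq_sum_right_factors[of "{q}"]) (simp_all, simp add: delta_def)

lemma kmul_delta_delta:
  "composable Q p q \<Longrightarrow> kmul Q (delta p) (delta q) = (delta (pcomp p q) :: ('v,'a,'k::field) kq)"
  by (rule ext, simp add: kmul_delta_left)
    (auto simp: is_left_factor_def left_cofactor_def delta_def pcomp_def composable_def)

lemma kmul_kzero_left [simp]: "kmul Q kzero h r = (0::'k::field)"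
  by (simp add: kmul_def supp_def kzero_def)

lemma kmul_kzero_right [simp]: "kmul Q h kzero r = (0::'k::field)"
  by (simp add: kmul_def supp_def kzero_def)

lemma supp_kmul_subset: "supp (kmul Q f g) \<subseteq> (\<lambda>(p, q). pcomp p q) ` (supp f \<times> supp g)"
proof
  fix r assume "r \<in> supp (kmul Q f g)"
  let ?P = "{(p,q). p \<in> supp f \<and> q \<in> supp g \<and> composable Q p q \<and> pcomp p q = r}"
  have "(\<Sum>pq\<in>?P. f (fst pq) * g (snd pq)) \<noteq> 0"
    using \<open>r \<in> supp (kmul Q f g)\<close> by (simp add: supp_def kmul_def)
  then have "?P \<noteq> {}" by (rule contrapos_nn) (simp only: sum.empty)
  then show "r \<in> (\<lambda>(p, q). pcomp p q) ` (supp f \<times> supp g)" by fastforce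
qed

lemma finite_supp_kmul:
  "finite (supp f) \<Longrightarrow> finite (supp g) \<Longrightarrow> finite (supp (kmul Q f g))"
  by (rule finite_subset[OF supp_kmul_subset]) simp

lemma hom_elt_kzero: "hom_elt Q deg i j n (kzero :: ('v,'a,'k::field) kq)"
  by (simp add: hom_elt_def supp_def kzero_def)

lemma hom_elt_ksmult: "hom_elt Q deg i j n f \<Longrightarrow> hom_elt Q deg i j n (ksmult c f)"
  unfolding hom_elt_def supp_def ksmult_def by (auto intro: finite_subset[of _ "{p. f p \<noteq> 0}"])

lemma hom_eltD:
  "hom_elt Q deg i j n f \<Longrightarrow> f p \<noteq> 0 \<Longrightarrow> is_path Q (arrs Q) p \<and> fst p = i \<and> ptgt Q p = j \<and> pdeg deg p = n"
  unfolding hom_elt_def supp_def by blast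

lemma ksub_kzero [simp]: "ksub h kzero = (h :: ('v,'a,'k::field) kq)"
  by (simp add: ksub_def kzero_def)

section \<open>Ideals of the path algebra\<close>

lemma ideal_gen_if_deltas:
  assumes "finite (supp f)" "\<forall>p\<in>supp f. delta p \<in> ideal_gen Q R"
  shows "f \<in> ideal_gen Q R"
proof -
  have "supp f \<subseteq> S \<Longrightarrow> f \<in> ideal_gen Q R" if "finite S" for S
    using that assms(2)
  proof (induction S arbitrary: f rule: finite_induct)
    case empty
    then have "f = kzero" by (auto simp: supp_def kzero_def)
    then show ?case by (simp add: ideal_gen.ig_zero)
  next
    case (insert p S)
    define f' where "f' = (\<lambda>r. if r = p then 0 else f r)"
    have "supp f' \<subseteq> S" "supp f' \<subseteq> supp f" using insert(4) by (auto simp: f'_def supp_def)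
    then have f'J: "f' \<in> ideal_gen Q R" using insert(3,5) by blast
    show ?case
    proof (cases "f p = 0")
      case True
      then have "f = f'" by (auto simp: f'_def)
      then show ?thesis using f'J by simp
    next
      case False
      then have "delta p \<in> ideal_gen Q R" using insert(5) unfolding supp_def by blast
      then have "kadd (ksmult (f p) (delta p)) f' \<in> ideal_gen Q R"
        using f'J by (intro ideal_gen.ig_add ideal_gen.ig_smult)
      moreover have "kadd (ksmult (f p) (delta p)) f' = f"
        by (auto simp: kadd_def ksmult_def delta_def f'_def)
      ultimately show ?thesis by simp
    qed
  qed
  then show ?thesis using assms(1) by blast
qed

definition restrict_hd :: "'a set \<Rightarrow> ('v,'a,'k::zero) kq \<Rightarrow> ('v,'a,'k) kq" where
  "restrict_hd S y = (\<lambda>r. if snd r \<noteq> [] \<and> hd (snd r) \<in> S then y r else 0)"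

definition restrict_last :: "'a set \<Rightarrow> ('v,'a,'k::zero) kq \<Rightarrow> ('v,'a,'k) kq" where
  "restrict_last S y = (\<lambda>r. if snd r \<noteq> [] \<and> last (snd r) \<in> S then y r else 0)"

lemma restrict_hd_kmul_delta_left:
  "restrict_hd S (kmul Q (delta p) x) =
     (if snd p = [] then kmul Q (delta p) (restrict_hd S x)
      else if hd (snd p) \<in> S then kmul Q (delta p) x else (kzero :: ('v,'a,'k::field) kq))"
proof
  fix r
  show "restrict_hd S (kmul Q (delta p) x) r = (if snd p = [] then kmul Q (delta p) (restrict_hd S x)
      else if hd (snd p) \<in> S then kmul Q (delta p) x else kzero) r"
  proof (cases "is_left_factor Q p r")
    case True
    then have "snd p \<noteq> [] \<Longrightarrow> snd r \<noteq> [] \<and> hd (snd r) = hd (snd p)"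
      by (simp add: is_left_factor_def)
    then show ?thesis using True
      by (auto simp: restrict_hd_def kmul_delta_left kzero_def is_left_factor_def left_cofactor_def)
  qed (auto simp: restrict_hd_def kmul_delta_left kzero_def)
qed

lemma restrict_hd_kmul_delta_right:
  assumes "\<And>w. x (w, []) = (0::'k::field)"
  shows "restrict_hd S (kmul Q x (delta p)) = kmul Q (restrict_hd S x) (delta p)"
proof
  fix r
  show "restrict_hd S (kmul Q x (delta p)) r = kmul Q (restrict_hd S x) (delta p) r"
  proof (cases "is_right_factor p r")
    case True
    let ?k = "length (snd r) - length (snd p)"
    have sr: "snd r = take ?k (snd r) @ snd p" using True unfolding is_right_factor_def
      by (metis append_take_drop_id)
    show ?thesis
    proof (cases "take ?k (snd r) = []")
      case True
      then show ?thesis using \<open>is_right_factor p r\<close> assms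
        by (auto simp: restrict_hd_def kmul_delta_right right_cofactor_def)
    next
      case False
      then have "snd r \<noteq> [] \<and> hd (snd r) = hd (take ?k (snd r))"
        by (metis sr hd_append2 Nil_is_append_conv)
      then show ?thesis using True False
        by (auto simp: restrict_hd_def kmul_delta_right right_cofactor_def)
    qed
  qed (auto simp: restrict_hd_def kmul_delta_right)
qed

lemma restrict_last_kmul_delta_right:
  "restrict_last S (kmul Q x (delta p)) =
     (if snd p = [] then kmul Q (restrict_last S x) (delta p)
      else if last (snd p) \<in> S then kmul Q x (delta p) else (kzero :: ('v,'a,'k::field) kq))"
proof
  fix r
  show "restrict_last S (kmul Q x (delta p)) r = (if snd p = [] then kmul Q (restrict_last S x) (delta p)
      else if last (snd p) \<in> S then kmul Q x (delta p) else kzero) r"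
  proof (cases "is_right_factor p r")
    case True
    then have sr: "snd r = take (length (snd r) - length (snd p)) (snd r) @ snd p"
      unfolding is_right_factor_def by (metis append_take_drop_id)
    then have "snd p \<noteq> [] \<Longrightarrow> snd r \<noteq> [] \<and> last (snd r) = last (snd p)"
      by (metis last_appendR Nil_is_append_conv)
    then show ?thesis using True
      by (auto simp: restrict_last_def kmul_delta_right kzero_def is_right_factor_def
          right_cofactor_def ptgt_def)
  qed (auto simp: restrict_last_def kmul_delta_right kzero_def)
qed

lemma restrict_last_kmul_delta_left:
  assumes "\<And>w. x (w, []) = (0::'k::field)"
  shows "restrict_last S (kmul Q (delta p) x) = kmul Q (delta p) (restrict_last S x)"
proof
  fix r
  show "restrict_last S (kmul Q (delta p) x) r = kmul Q (delta p) (restrict_last S x) r"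
  proof (cases "is_left_factor Q p r")
    case True
    then have sr: "snd r = snd p @ snd (left_cofactor p r)" by (simp add: is_left_factor_def)
    show ?thesis
    proof (cases "snd (left_cofactor p r) = []")
      case True
      then have "left_cofactor p r = (fst r, [])" by (simp add: left_cofactor_def)
      then show ?thesis using \<open>is_left_factor Q p r\<close> assms True
        by (auto simp: restrict_last_def kmul_delta_left)
    next
      case False
      then have "snd r \<noteq> [] \<and> last (snd r) = last (snd (left_cofactor p r))"
        by (metis sr last_appendR Nil_is_append_conv)
      then show ?thesis using True False by (auto simp: restrict_last_def kmul_delta_left)
    qed
  qed (auto simp: restrict_last_def kmul_delta_left)
qed

locale pinched_gentle =
  fixes Q :: "('v,'a) quiver" and Q1g Q1p :: "'a set" and Ig :: "('v,'a) path set"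
    and deg :: "'a \<Rightarrow> int" and ap am bp bm :: "'a \<Rightarrow> 'a"
  assumes graded_pinched_gentle: "graded_pinched_gentle Q Q1g Q1p Ig deg ap am bp bm"
begin

abbreviation J :: "('v,'a,'k::field) kq set" where
  "J \<equiv> Lambda_ideal Q Q1p Ig ap am bp bm"

lemma finite_arrs: "finite (arrs Q)"
  and arrs_verts: "a \<in> arrs Q \<Longrightarrow> src Q a \<in> verts Q \<and> tgt Q a \<in> verts Q"
  and Q1g_Un_Q1p: "Q1g \<union> Q1p = arrs Q"
  and gentle: "gentle Q Q1g Ig"
  using graded_pinched_gentle by (simp_all add: graded_pinched_gentle_def)

lemma is_path_snocD:
  assumes "is_path Q (arrs Q) (w, l @ [x])" "l \<noteq> []"
  shows "is_path Q (arrs Q) (src Q (last l), l)"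
proof -
  have "last l \<in> arrs Q" using assms by (auto simp: is_path_def)
  moreover have "arrow_chain Q l" using assms(1) arrow_chain_appendD[of Q l "[x]"] by (simp add: is_path_def)
  ultimately show ?thesis using assms arrs_verts[of "last l"] by (auto simp: is_path_def)
qed

lemma is_path_butlastD:
  assumes "is_path Q (arrs Q) (w, t @ [c])"
  shows "is_path Q (arrs Q) (tgt Q c, t)"
proof -
  have "c \<in> arrs Q" "set t \<subseteq> arrs Q" "arrow_chain Q (t @ [c])"
    using assms by (simp_all add: is_path_def)
  moreover have "src Q (last t) = tgt Q c" if "t \<noteq> []"
  proof -
    have "t @ [c] = butlast t @ [last t, c] @ []" using that by simp
    then show ?thesis using \<open>arrow_chain Q (t @ [c])\<close> by (metis arrow_chain_middle)
  qed
  ultimately show ?thesis using arrs_verts[of c] arrow_chain_appendD[of Q t "[c]"]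
    by (auto simp: is_path_def)
qed

lemma relation_is_path: "p \<in> Ig \<Longrightarrow> is_path Q Q1g p \<and> length (snd p) = 2"
  using gentle by (simp add: gentle_def)

lemma pinched_incidences:
  "g \<in> Q1p \<Longrightarrow> src Q (ap g) = src Q g \<and> src Q (bp g) = src Q g
     \<and> tgt Q (am g) = src Q g \<and> tgt Q (bm g) = src Q g \<and> tgt Q g = src Q g"
  using graded_pinched_gentle by (simp add: graded_pinched_gentle_def pinched_data_def)

lemma finite_Q1g: "finite {x \<in> Q1g. P x}"
  using finite_arrs Q1g_Un_Q1p by (auto intro: finite_subset)

lemma pinched_rels_cases:
  assumes "x \<in> pinched_rels Q Q1p Ig ap am bp bm"
  obtains (gentle) p where "p \<in> Ig" "x = delta p"
  | (bp) g where "g \<in> Q1p" "x = kadd (delta (src Q g, [bp g, g])) (delta (src Q g, [bp g]))"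
  | (bm) g where "g \<in> Q1p" "x = kadd (delta (src Q (bm g), [g, bm g])) (delta (src Q (bm g), [bm g]))"
  | (ap) g where "g \<in> Q1p" "x = ksub (delta (src Q g, [ap g, g])) (delta (src Q g, [ap g]))"
  | (am) g where "g \<in> Q1p" "x = ksub (delta (src Q (am g), [g, am g])) (delta (src Q (am g), [am g]))"
  using assms unfolding pinched_rels_def Let_def by blast

lemma J_kzero: "kzero \<in> J"
  unfolding Lambda_ideal_def by (rule ideal_gen.ig_zero)

lemma J_gen: "x \<in> pinched_rels Q Q1p Ig ap am bp bm \<Longrightarrow> x \<in> J"
  unfolding Lambda_ideal_def by (rule ideal_gen.ig_gen)

lemma J_kmul_left: "x \<in> J \<Longrightarrow> is_path Q (arrs Q) p \<Longrightarrow> kmul Q (delta p) x \<in> J"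
  unfolding Lambda_ideal_def by (rule ideal_gen.ig_left)

lemma J_kmul_right: "x \<in> J \<Longrightarrow> is_path Q (arrs Q) p \<Longrightarrow> kmul Q x (delta p) \<in> J"
  unfolding Lambda_ideal_def by (rule ideal_gen.ig_right)

lemma J_ksmult: "x \<in> J \<Longrightarrow> ksmult c x \<in> J"
  unfolding Lambda_ideal_def by (rule ideal_gen.ig_smult)

lemma J_neg: "x \<in> J \<Longrightarrow> ksub (\<lambda>_. 0) x \<in> J"
proof -
  assume "x \<in> J"
  then have "ksmult (-1) x \<in> J" by (rule J_ksmult)
  moreover have "ksmult (-1) x = ksub (\<lambda>_. 0) x" by (auto simp: ksmult_def ksub_def)
  ultimately show ?thesis by simp
qed

lemma J_ksmult_iff:
  assumes "c \<noteq> 0"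
  shows "ksmult c x \<in> J \<longleftrightarrow> x \<in> J"
proof
  assume "ksmult c x \<in> J"
  then have "ksmult (inverse c) (ksmult c x) \<in> J" by (rule J_ksmult)
  moreover have "ksmult (inverse c) (ksmult c x) = x"
    using assms by (simp add: ksmult_def mult.assoc[symmetric])
  ultimately show "x \<in> J" by simp
qed (rule J_ksmult)

definition pinch_arrows :: "'a set" where
  "pinch_arrows = (\<Union>g\<in>Q1p. {ap g, am g, bp g, bm g})"

text \<open>All relations have length two, except for the pinched ones, whose length-one terms are
  arrows of \<open>pinch_arrows\<close>.\<close>

lemma J_vanishes_short:
  assumes "y \<in> J" "length l \<le> 1" "set l \<inter> pinch_arrows = {}"
  shows "y (w, l) = 0"
  using assms unfolding Lambda_ideal_def
proof (induction arbitrary: w l rule: ideal_gen.induct)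
  case (ig_gen x)
  then show ?case
  proof (cases rule: pinched_rels_cases)
    case (gentle p)
    then show ?thesis using relation_is_path[of p] ig_gen(2) by (auto simp: delta_def)
  qed (use ig_gen(2,3) in \<open>auto simp: delta_def kadd_def ksub_def pinch_arrows_def\<close>)
next
  case (ig_left x p)
  have "set (drop k l) \<inter> pinch_arrows = {}" for k
    using ig_left(5) set_drop_subset[of k l] by blast
  then show ?case using ig_left by (simp add: kmul_delta_left left_cofactor_def)
next
  case (ig_right x p)
  have "set (take k l) \<inter> pinch_arrows = {}" for k
    using ig_right(5) set_take_subset[of k l] by blast
  then show ?case using ig_right by (simp add: kmul_delta_right right_cofactor_def)
qed (simp_all add: kzero_def kadd_def ksmult_def)

lemma J_vanishes_trivial: "y \<in> J \<Longrightarrow> y (w, []) = 0"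
  by (rule J_vanishes_short) simp_all

lemma restrict_hd_pinched_rel:
  assumes "x \<in> pinched_rels Q Q1p Ig ap am bp bm" "\<forall>g\<in>Q1p. g \<notin> S \<and> am g \<notin> S \<and> bm g \<notin> S"
  shows "restrict_hd S x = x \<or> restrict_hd S x = kzero"
  using assms(1)
proof (cases rule: pinched_rels_cases)
  case (gentle p)
  then have "restrict_hd S x = (if snd p \<noteq> [] \<and> hd (snd p) \<in> S then x else kzero)"
    by (intro ext) (auto simp: restrict_hd_def delta_def kzero_def)
  then show ?thesis by simp
next
  case (bp g)
  then have "restrict_hd S x = (if bp g \<in> S then x else kzero)"
    by (intro ext) (auto simp: restrict_hd_def delta_def kzero_def kadd_def)
  then show ?thesis by simp
next
  case (ap g)
  then have "restrict_hd S x = (if ap g \<in> S then x else kzero)"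
    by (intro ext) (auto simp: restrict_hd_def delta_def kzero_def ksub_def)
  then show ?thesis by simp
qed (use assms(2) in \<open>(intro disjI2 ext, auto simp: restrict_hd_def delta_def kzero_def kadd_def ksub_def)+\<close>)

lemma restrict_last_pinched_rel:
  assumes "x \<in> pinched_rels Q Q1p Ig ap am bp bm" "\<forall>g\<in>Q1p. g \<notin> S \<and> ap g \<notin> S \<and> bp g \<notin> S"
  shows "restrict_last S x = x \<or> restrict_last S x = kzero"
  using assms(1)
proof (cases rule: pinched_rels_cases)
  case (gentle p)
  then have "restrict_last S x = (if snd p \<noteq> [] \<and> last (snd p) \<in> S then x else kzero)"
    by (intro ext) (auto simp: restrict_last_def delta_def kzero_def)
  then show ?thesis by simp
next
  case (bm g)
  then have "restrict_last S x = (if bm g \<in> S then x else kzero)"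
    by (intro ext) (auto simp: restrict_last_def delta_def kzero_def kadd_def)
  then show ?thesis by simp
next
  case (am g)
  then have "restrict_last S x = (if am g \<in> S then x else kzero)"
    by (intro ext) (auto simp: restrict_last_def delta_def kzero_def ksub_def)
  then show ?thesis by simp
qed (use assms(2) in \<open>(intro disjI2 ext, auto simp: restrict_last_def delta_def kzero_def kadd_def ksub_def)+\<close>)

text \<open>The relations are homogeneous with respect to the first arrow, except that a pinched
  relation mixes the first arrows of \<open>g bm g\<close> and \<open>bm g\<close> (and of \<open>g am g\<close> and \<open>am g\<close>).\<close>

lemma restrict_hd_in_J:
  fixes y :: "('v,'a,'k::field) kq"
  assumes "\<forall>g\<in>Q1p. g \<notin> S \<and> am g \<notin> S \<and> bm g \<notin> S" "y \<in> J"
  shows "restrict_hd S y \<in> J"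
  using assms(2) unfolding Lambda_ideal_def
proof (induction rule: ideal_gen.induct)
  case ig_zero
  have "restrict_hd S kzero = (kzero :: ('v,'a,'k) kq)" by (auto simp: restrict_hd_def kzero_def)
  then show ?case by (simp add: ideal_gen.ig_zero)
next
  case (ig_gen x)
  then show ?case using restrict_hd_pinched_rel[OF _ assms(1)] by (metis ideal_gen.intros(1,2))
next
  case (ig_add x y)
  have "restrict_hd S (kadd x y) = kadd (restrict_hd S x) (restrict_hd S y)"
    by (auto simp: restrict_hd_def kadd_def)
  then show ?case using ig_add by (simp add: ideal_gen.ig_add)
next
  case (ig_smult x c)
  have "restrict_hd S (ksmult c x) = ksmult c (restrict_hd S x)" by (auto simp: restrict_hd_def ksmult_def)
  then show ?case using ig_smult by (simp add: ideal_gen.ig_smult)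
next
  case (ig_left x p)
  then show ?case by (simp add: restrict_hd_kmul_delta_left ideal_gen.ig_left ideal_gen.ig_zero)
next
  case (ig_right x p)
  then have "\<And>w. x (w, []) = 0" using J_vanishes_trivial unfolding Lambda_ideal_def by blast
  then show ?case using ig_right by (simp add: restrict_hd_kmul_delta_right ideal_gen.ig_right)
qed

lemma restrict_last_in_J:
  fixes y :: "('v,'a,'k::field) kq"
  assumes "\<forall>g\<in>Q1p. g \<notin> S \<and> ap g \<notin> S \<and> bp g \<notin> S" "y \<in> J"
  shows "restrict_last S y \<in> J"
  using assms(2) unfolding Lambda_ideal_def
proof (induction rule: ideal_gen.induct)
  case ig_zero
  have "restrict_last S kzero = (kzero :: ('v,'a,'k) kq)" by (auto simp: restrict_last_def kzero_def)
  then show ?case by (simp add: ideal_gen.ig_zero)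
next
  case (ig_gen x)
  then show ?case using restrict_last_pinched_rel[OF _ assms(1)] by (metis ideal_gen.intros(1,2))
next
  case (ig_add x y)
  have "restrict_last S (kadd x y) = kadd (restrict_last S x) (restrict_last S y)"
    by (auto simp: restrict_last_def kadd_def)
  then show ?case using ig_add by (simp add: ideal_gen.ig_add)
next
  case (ig_smult x c)
  have "restrict_last S (ksmult c x) = ksmult c (restrict_last S x)"
    by (auto simp: restrict_last_def ksmult_def)
  then show ?case using ig_smult by (simp add: ideal_gen.ig_smult)
next
  case (ig_left x p)
  then have "\<And>w. x (w, []) = 0" using J_vanishes_trivial unfolding Lambda_ideal_def by blast
  then show ?case using ig_left by (simp add: restrict_last_kmul_delta_left ideal_gen.ig_left)
next
  case (ig_right x p)
  then show ?case by (simp add: restrict_last_kmul_delta_right ideal_gen.ig_right ideal_gen.ig_zero)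
qed

lemma delta_in_J_of_relation_prefix:
  assumes "is_path Q (arrs Q) (w, c # t)" "(src Q c, [x, c]) \<in> Ig"
  shows "delta (w, x # c # t) \<in> J"
proof -
  have "composable Q (src Q c, [x, c]) (w, t)"
  proof (cases t)
    case Nil
    then show ?thesis using assms(1) by (simp add: composable_def ptgt_def is_path_def)
  next
    case (Cons d t')
    then have "src Q c = tgt Q d"
      using assms(1) arrow_chain_Cons_Cons[of Q c d t'] by (simp add: is_path_def)
    then show ?thesis using Cons by (simp add: composable_def ptgt_def)
  qed
  then have "delta (w, x # c # t) = kmul Q (delta (src Q c, [x, c])) (delta (w, t))"
    by (simp add: kmul_delta_delta pcomp_def)
  also have "\<dots> \<in> J"
    using assms is_path_ConsD by (intro J_kmul_right J_gen) (auto simp: pinched_rels_def)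
  finally show ?thesis .
qed

lemma delta_in_J_of_relation_suffix:
  assumes "is_path Q (arrs Q) (tgt Q c, t)" "(v, [c, x]) \<in> Ig"
  shows "delta (v, t @ [c, x]) \<in> J"
proof -
  have "delta (v, t @ [c, x]) = kmul Q (delta (tgt Q c, t)) (delta (v, [c, x]))"
    by (simp add: kmul_delta_delta pcomp_def composable_def ptgt_def)
  also have "\<dots> \<in> J"
    using assms by (intro J_kmul_left J_gen) (auto simp: pinched_rels_def)
  finally show ?thesis .
qed

end

section \<open>The Kronecker arrows\<close>

lemma card_le_2_cases:
  assumes "finite A" "card A \<le> 2" "{a, b, x} \<subseteq> A" "a \<noteq> b"
  shows "x = a \<or> x = b"
proof (rule ccontr)
  assume "\<not> (x = a \<or> x = b)"
  then have "card {a, b, x} = 3" using assms(4) by auto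
  moreover have "card {a, b, x} \<le> card A" using assms by (intro card_mono)
  ultimately show False using assms(2) by simp
qed

lemma card_le_Suc0_not_both:
  assumes "finite {x \<in> A. P x}" "card {x \<in> A. P x} \<le> Suc 0" "a \<in> A" "b \<in> A" "a \<noteq> b"
  shows "\<not> (P a \<and> P b)"
  using assms card_le_Suc0_iff_eq[OF assms(1)] by blast

locale kronecker = pinched_gentle Q Q1g Q1p Ig deg ap am bp bm
  for Q :: "('v,'a) quiver" and Q1g Q1p Ig deg ap am bp bm +
  fixes \<alpha> \<beta> :: 'a and v1 v2 :: 'v and \<mu> :: "'k::field"
  assumes acyclic_graded_kronecker: "acyclic_graded_kronecker Q Q1g Q1p Ig deg \<alpha> \<beta> v1 v2"
    and \<mu>_nonzero: "\<mu> \<noteq> 0"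
begin

lemma kronecker_arrows:
  "\<alpha> \<in> Q1g" "\<beta> \<in> Q1g" "\<alpha> \<noteq> \<beta>" "src Q \<alpha> = v1" "src Q \<beta> = v1" "tgt Q \<alpha> = v2" "tgt Q \<beta> = v2"
  "deg \<beta> = deg \<alpha>" "v1 \<noteq> v2"
  using acyclic_graded_kronecker by (auto simp: acyclic_graded_kronecker_def)

lemma no_pinch_at_kronecker: "g \<in> Q1p \<Longrightarrow> src Q g \<noteq> v1 \<and> src Q g \<noteq> v2"
  using acyclic_graded_kronecker by (auto simp: acyclic_graded_kronecker_def)

lemma kronecker_arrow_not_pinched:
  assumes "x = \<alpha> \<or> x = \<beta>" "g \<in> Q1p"
  shows "x \<notin> {g, ap g, am g, bp g, bm g}"
proof -
  have "src Q x = v1" "tgt Q x = v2" using assms(1) kronecker_arrows by auto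
  then show ?thesis using pinched_incidences[OF assms(2)] no_pinch_at_kronecker[OF assms(2)] by auto
qed

lemma J_vanishes_kronecker_arrow:
  assumes "y \<in> J" "x = \<alpha> \<or> x = \<beta>"
  shows "y (w, [x]) = 0"
proof (rule J_vanishes_short[OF assms(1)])
  show "set [x] \<inter> pinch_arrows = {}"
    using kronecker_arrow_not_pinched[OF assms(2)] by (auto simp: pinch_arrows_def)
qed simp

lemma arrow_at_kronecker_in_Q1g:
  assumes "c \<in> arrs Q" "tgt Q c = v1 \<or> src Q c = v2 \<or> tgt Q c = v2 \<or> src Q c = v1"
  shows "c \<in> Q1g"
proof (rule ccontr)
  assume "c \<notin> Q1g"
  then have "c \<in> Q1p" using assms(1) Q1g_Un_Q1p by blast
  then show False using assms(2) pinched_incidences no_pinch_at_kronecker by metis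
qed

lemma kronecker_arrow_cases:
  assumes "x \<in> arrs Q" "tgt Q x = v2 \<or> src Q x = v1"
  shows "x = \<alpha> \<or> x = \<beta>"
proof -
  have x: "x \<in> Q1g" using arrow_at_kronecker_in_Q1g assms by blast
  have "v1 \<in> verts Q" "v2 \<in> verts Q"
    using arrs_verts[of \<alpha>] kronecker_arrows Q1g_Un_Q1p by auto
  then have "card {a \<in> Q1g. tgt Q a = v2} \<le> 2" "card {a \<in> Q1g. src Q a = v1} \<le> 2"
    using gentle unfolding gentle_def by blast+
  then show ?thesis
    using assms(2) card_le_2_cases[OF finite_Q1g, of _ \<alpha> \<beta> x] x kronecker_arrows by auto
qed

lemma relation_after_kronecker:
  assumes "c \<in> Q1g" "tgt Q c = v1"
  shows "(src Q c, [\<beta>, c]) \<in> Ig \<longleftrightarrow> (src Q c, [\<alpha>, c]) \<notin> Ig"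
proof -
  have A: "card {x \<in> Q1g. src Q x = tgt Q c \<and> (src Q c, [x, c]) \<in> Ig} \<le> Suc 0"
    and B: "card {x \<in> Q1g. src Q x = tgt Q c \<and> (src Q c, [x, c]) \<notin> Ig} \<le> Suc 0"
    using gentle assms(1) unfolding gentle_def by auto
  show ?thesis
    using card_le_Suc0_not_both[OF finite_Q1g A, of \<alpha> \<beta>] card_le_Suc0_not_both[OF finite_Q1g B, of \<alpha> \<beta>]
      assms(2) kronecker_arrows by auto
qed

lemma relation_before_kronecker:
  assumes "c \<in> Q1g" "src Q c = v2"
  shows "(v1, [c, \<beta>]) \<in> Ig \<longleftrightarrow> (v1, [c, \<alpha>]) \<notin> Ig"
proof -
  have A: "card {x \<in> Q1g. src Q c = tgt Q x \<and> (src Q x, [c, x]) \<in> Ig} \<le> Suc 0"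
    and B: "card {x \<in> Q1g. src Q c = tgt Q x \<and> (src Q x, [c, x]) \<notin> Ig} \<le> Suc 0"
    using gentle assms(1) unfolding gentle_def by auto
  show ?thesis
    using card_le_Suc0_not_both[OF finite_Q1g A, of \<alpha> \<beta>] card_le_Suc0_not_both[OF finite_Q1g B, of \<alpha> \<beta>]
      assms(2) kronecker_arrows by auto
qed

text \<open>Gentleness gives, for an arrow \<open>c\<close> into \<open>v1\<close>, exactly one of \<open>\<alpha> c\<close>, \<open>\<beta> c\<close> outside \<open>Ig\<close>,
  and for an arrow \<open>c\<close> out of \<open>v2\<close>, exactly one of \<open>c \<alpha>\<close>, \<open>c \<beta>\<close>.\<close>

definition kron_after :: "'a \<Rightarrow> 'a" where
  "kron_after c = (if (src Q c, [\<alpha>, c]) \<in> Ig then \<beta> else \<alpha>)"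

definition kron_before :: "'a \<Rightarrow> 'a" where
  "kron_before c = (if (v1, [c, \<alpha>]) \<in> Ig then \<beta> else \<alpha>)"

lemma kron_after_cases: "kron_after c = \<alpha> \<or> kron_after c = \<beta>"
  and kron_before_cases: "kron_before c = \<alpha> \<or> kron_before c = \<beta>"
  by (simp_all add: kron_after_def kron_before_def)

lemma kron_after_not_relation:
  assumes "tgt Q c = v1"
  shows "(src Q c, [kron_after c, c]) \<notin> Ig"
proof (cases "(src Q c, [\<alpha>, c]) \<in> Ig")
  case True
  then have "c \<in> Q1g" using relation_is_path[OF True] by (simp add: is_path_def)
  then show ?thesis using True relation_after_kronecker assms by (simp add: kron_after_def)
qed (simp add: kron_after_def)

lemma kron_before_not_relation:
  assumes "src Q c = v2"
  shows "(v1, [c, kron_before c]) \<notin> Ig"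
proof (cases "(v1, [c, \<alpha>]) \<in> Ig")
  case True
  then have "c \<in> Q1g" using relation_is_path[OF True] by (simp add: is_path_def)
  then show ?thesis using True relation_before_kronecker assms by (simp add: kron_before_def)
qed (simp add: kron_before_def)

lemma relation_unless_kron_after:
  assumes "c \<in> Q1g" "tgt Q c = v1" "x = \<alpha> \<or> x = \<beta>" "x \<noteq> kron_after c"
  shows "(src Q c, [x, c]) \<in> Ig"
  using assms relation_after_kronecker[OF assms(1,2)] by (auto simp: kron_after_def split: if_splits)

lemma relation_unless_kron_before:
  assumes "c \<in> Q1g" "src Q c = v2" "x = \<alpha> \<or> x = \<beta>" "x \<noteq> kron_before c"
  shows "(v1, [c, x]) \<in> Ig"
  using assms relation_before_kronecker[OF assms(1,2)] by (auto simp: kron_before_def split: if_splits)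

lemma kron_after_arrow [simp]: "src Q (kron_after c) = v1" "tgt Q (kron_after c) = v2"
  and kron_before_arrow [simp]: "src Q (kron_before c) = v1" "tgt Q (kron_before c) = v2"
  using kron_after_cases[of c] kron_before_cases[of c] kronecker_arrows by auto

lemma deg_kron_after [simp]: "deg (kron_after c) = deg \<alpha>"
  and deg_kron_before [simp]: "deg (kron_before c) = deg \<alpha>"
  using kron_after_cases[of c] kron_before_cases[of c] kronecker_arrows by auto

definition coeff_kron :: "'a \<Rightarrow> 'k" where
  "coeff_kron x = (if x = \<alpha> then 1 else if x = \<beta> then \<mu> else 0)"

text \<open>The only nonzero entry of the differential of \<open>B\<close>.\<close>

definition kron_elt :: "('v,'a,'k) kq" where
  "kron_elt = kadd (delta (v1, [\<alpha>])) (ksmult \<mu> (delta (v1, [\<beta>])))"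

lemma coeff_kron_nonzero: "x = \<alpha> \<or> x = \<beta> \<Longrightarrow> coeff_kron x \<noteq> 0"
  using \<mu>_nonzero by (auto simp: coeff_kron_def)

lemma supp_kron_elt: "supp kron_elt \<subseteq> {(v1, [\<alpha>]), (v1, [\<beta>])}"
  by (auto simp: supp_def kron_elt_def kadd_def ksmult_def delta_def)

lemma finite_supp_kron_elt: "finite (supp kron_elt)"
  using supp_kron_elt by (rule finite_subset) simp

lemma kron_elt_arrows: "kron_elt (v1, [\<alpha>]) = 1" "kron_elt (v1, [\<beta>]) = \<mu>"
  using kronecker_arrows(3) by (auto simp: kron_elt_def kadd_def ksmult_def delta_def)

lemma kmul_kron_elt_left_Nil [simp]: "kmul Q kron_elt h (w, []) = 0"
  and kmul_kron_elt_left_Cons [simp]: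
    "kmul Q kron_elt h (w, x # t) = (if ptgt Q (w, t) = v1 then coeff_kron x * h (w, t) else 0)"
  using kronecker_arrows(3)
  by (auto simp: kmul_eq_sum_left_factors[OF _ supp_kron_elt] kron_elt_arrows coeff_kron_def)

lemma kmul_kron_elt_right_Nil [simp]: "kmul Q h kron_elt (w, []) = 0"
  and kmul_kron_elt_right_snoc [simp]:
    "kmul Q h kron_elt (w, t @ [x]) = (if w = v1 then h (v2, t) * coeff_kron x else 0)"
proof -
  have "is_right_factor (v1, [a]) (w, t @ [x]) \<longleftrightarrow> w = v1 \<and> x = a" for a
    by (auto simp: is_right_factor_def)
  moreover have "right_cofactor Q (v1, [a]) (w, t @ [x]) = (v2, t)" if "a = \<alpha> \<or> a = \<beta>" for a
    using that kronecker_arrows by (auto simp: right_cofactor_def ptgt_def)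
  ultimately show "kmul Q h kron_elt (w, t @ [x]) = (if w = v1 then h (v2, t) * coeff_kron x else 0)"
    using kronecker_arrows(3)
    by (auto simp: kmul_eq_sum_right_factors[OF _ supp_kron_elt] kron_elt_arrows coeff_kron_def)
  show "kmul Q h kron_elt (w, []) = 0"
    using kronecker_arrows(3)
    by (simp add: kmul_eq_sum_right_factors[OF _ supp_kron_elt] is_right_factor_def)
qed

lemma kmul_kron_elt_right_snoc2 [simp]:
  "kmul Q h kron_elt (w, t @ [c, x]) = (if w = v1 then h (v2, t @ [c]) * coeff_kron x else 0)"
  using kmul_kron_elt_right_snoc[of h w "t @ [c]" x] by simp

lemma coeff_kron_nonzeroD: "coeff_kron x \<noteq> 0 \<Longrightarrow> x = \<alpha> \<or> x = \<beta>"
  by (auto simp: coeff_kron_def split: if_splits)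

lemma path_into_v2_shape:
  assumes "is_path Q (arrs Q) (w, l)" "ptgt Q (w, l) = v2" "w \<noteq> v1" "w \<noteq> v2"
  obtains x c t where "l = x # c # t" "x = \<alpha> \<or> x = \<beta>" "tgt Q c = v1"
proof -
  obtain x l' where l: "l = x # l'" using assms(2,4) by (cases l) (auto simp: ptgt_def)
  then have x: "x = \<alpha> \<or> x = \<beta>"
    using assms(1,2) kronecker_arrow_cases by (auto simp: is_path_def ptgt_def)
  obtain c t where l': "l' = c # t"
    using assms(1,3) l x kronecker_arrows by (cases l') (auto simp: is_path_def)
  have "src Q x = tgt Q c" using assms(1) l l' arrow_chain_Cons_Cons[of Q x c t] by (simp add: is_path_def)
  then show ?thesis using that l l' x kronecker_arrows by auto
qed

lemma path_from_v1_shape: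
  assumes "is_path Q (arrs Q) (v1, l)" "ptgt Q (v1, l) \<noteq> v1" "ptgt Q (v1, l) \<noteq> v2"
  obtains t c x where "l = t @ [c, x]" "x = \<alpha> \<or> x = \<beta>" "src Q c = v2"
proof -
  obtain l' x where l: "l = l' @ [x]" using assms(2) by (cases l rule: rev_cases) (auto simp: ptgt_def)
  then have x: "x = \<alpha> \<or> x = \<beta>"
    using assms(1) kronecker_arrow_cases by (auto simp: is_path_def)
  obtain t c where l': "l' = t @ [c]"
    using assms(3) l x kronecker_arrows by (cases l' rule: rev_cases) (auto simp: ptgt_def)
  have "arrow_chain Q (t @ [c, x] @ [])" using assms(1) l l' by (simp add: is_path_def)
  then have "src Q c = tgt Q x" by (rule arrow_chain_middle)
  then show ?thesis using that l l' x kronecker_arrows by auto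
qed

section \<open>Dividing by \<open>\<alpha> + \<mu>\<beta>\<close> on the left\<close>

definition kron_ldiv :: "('v,'a,'k) kq \<Rightarrow> ('v,'a,'k) kq" where
  "kron_ldiv y = (\<lambda>r. if snd r \<noteq> [] \<and> tgt Q (hd (snd r)) = v1
      then inverse (coeff_kron (kron_after (hd (snd r)))) * y (fst r, kron_after (hd (snd r)) # snd r)
      else 0)"

lemma kron_ldiv_Nil [simp]: "kron_ldiv y (w, []) = 0"
  and kron_ldiv_Cons [simp]: "kron_ldiv y (w, c # t) =
    (if tgt Q c = v1 then inverse (coeff_kron (kron_after c)) * y (w, kron_after c # c # t) else 0)"
  by (simp_all add: kron_ldiv_def)

lemma kron_ldiv_pinched_rel:
  assumes "x \<in> pinched_rels Q Q1p Ig ap am bp bm"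
  shows "kron_ldiv x = kzero"
proof
  fix r :: "('v,'a) path"
  obtain w l where r: "r = (w, l)" by fastforce
  have "x (w, kron_after c # c # t) = 0" if c: "tgt Q c = v1" for c t
    using assms
  proof (cases rule: pinched_rels_cases)
    case (gentle p)
    show ?thesis
    proof (rule ccontr)
      assume "x (w, kron_after c # c # t) \<noteq> 0"
      then have "p = (w, kron_after c # c # t)" using gentle by (auto simp: delta_def split: if_splits)
      then have "p = (src Q c, [kron_after c, c])"
        using relation_is_path[OF gentle(1)] by (auto simp: is_path_def)
      then show False using kron_after_not_relation[OF c] gentle(1) by simp
    qed
  qed (use c pinched_incidences no_pinch_at_kronecker in \<open>force simp: delta_def kadd_def ksub_def\<close>)+
  then show "kron_ldiv x r = kzero r" using r by (cases l) (auto simp: kzero_def)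
qed

lemma kron_ldiv_kmul_trivial_left:
  "kron_ldiv (kmul Q (delta (u, [])) x) = (if u = v2 then kron_ldiv x else kzero)"
proof
  fix r :: "('v,'a) path"
  obtain w l where "r = (w, l)" by fastforce
  then show "kron_ldiv (kmul Q (delta (u, [])) x) r = (if u = v2 then kron_ldiv x else kzero) r"
    by (cases l) (auto simp: kmul_delta_left ptgt_def kzero_def)
qed

lemma kron_ldiv_kmul_arrow_left:
  "kron_ldiv (kmul Q (delta (u, [a])) x) =
     ksmult (inverse (coeff_kron a)) (restrict_hd {c. tgt Q c = v1 \<and> kron_after c = a \<and> u = v1} x)"
proof
  fix r :: "('v,'a) path"
  obtain w l where "r = (w, l)" by fastforce
  then show "kron_ldiv (kmul Q (delta (u, [a])) x) r =
      ksmult (inverse (coeff_kron a)) (restrict_hd {c. tgt Q c = v1 \<and> kron_after c = a \<and> u = v1} x) r"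
    by (cases l) (auto simp: kmul_delta_left ptgt_def restrict_hd_def ksmult_def)
qed

lemma kron_ldiv_kmul_path_left:
  "kron_ldiv (kmul Q (delta (u, a # b # ps)) x) =
     (if tgt Q b = v1 \<and> kron_after b = a
      then ksmult (inverse (coeff_kron a)) (kmul Q (delta (u, b # ps)) x) else kzero)"
proof
  fix r :: "('v,'a) path"
  obtain w l where "r = (w, l)" by fastforce
  then show "kron_ldiv (kmul Q (delta (u, a # b # ps)) x) r =
      (if tgt Q b = v1 \<and> kron_after b = a
       then ksmult (inverse (coeff_kron a)) (kmul Q (delta (u, b # ps)) x) else kzero) r"
    by (cases l) (auto simp: kmul_delta_left ksmult_def kzero_def)
qed

lemma kron_ldiv_kmul_right:
  assumes short: "\<And>w. x (w, []) = 0" "\<And>w. x (w, [\<alpha>]) = 0" "\<And>w. x (w, [\<beta>]) = 0"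
  shows "kron_ldiv (kmul Q x (delta p)) = kmul Q (kron_ldiv x) (delta p)"
proof
  fix r :: "('v,'a) path"
  obtain w l where r: "r = (w, l)" by fastforce
  show "kron_ldiv (kmul Q x (delta p)) r = kmul Q (kron_ldiv x) (delta p) r"
  proof (cases "l \<noteq> [] \<and> tgt Q (hd l) = v1")
    case False
    then have "\<not> (is_right_factor p r \<and> snd (right_cofactor Q p r) \<noteq> []
        \<and> tgt Q (hd (snd (right_cofactor Q p r))) = v1)"
      using r by (auto simp: is_right_factor_def right_cofactor_def)
    then show ?thesis using False r by (auto simp: kron_ldiv_def kmul_delta_right)
  next
    case True
    then obtain c t where l: "l = c # t" and c: "tgt Q c = v1" by (cases l) auto
    let ?a = "kron_after c"
    consider "length (snd p) \<le> length t" | "length (snd p) = Suc (length t)"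
      | "length (snd p) > Suc (length t)" by linarith
    then show ?thesis
    proof cases
      case 1
      then have "drop (Suc (Suc (length t)) - length (snd p)) (?a # c # t)
            = drop (Suc (length t) - length (snd p)) (c # t)"
        and "take (Suc (Suc (length t)) - length (snd p)) (?a # c # t)
            = ?a # take (Suc (length t) - length (snd p)) (c # t)"
        and "take (Suc (length t) - length (snd p)) (c # t) \<noteq> []"
        and "hd (take (Suc (length t) - length (snd p)) (c # t)) = c"
        by (simp_all add: Suc_diff_le)
      then show ?thesis using r l c 1
        by (auto simp: kmul_delta_right is_right_factor_def right_cofactor_def Suc_diff_le)
    next
      case 2
      then show ?thesis using r l c short kron_after_cases[of c]
        by (auto simp: kmul_delta_right is_right_factor_def right_cofactor_def)
    next
      case 3
      then show ?thesis using r l c short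
        by (auto simp: kmul_delta_right is_right_factor_def right_cofactor_def)
    qed
  qed
qed

lemma kron_ldiv_kmul_delta_left_in_J:
  assumes "x \<in> J" "kron_ldiv x \<in> J" "is_path Q (arrs Q) p"
  shows "kron_ldiv (kmul Q (delta p) x) \<in> J"
proof -
  obtain u l where p: "p = (u, l)" by fastforce
  consider "l = []" | a where "l = [a]" | a b ps where "l = a # b # ps"
    by (metis list.exhaust)
  then show ?thesis
  proof cases
    case 1
    then show ?thesis using assms(2) p by (simp add: kron_ldiv_kmul_trivial_left J_kzero)
  next
    case (2 a)
    let ?S = "{c. tgt Q c = v1 \<and> kron_after c = a \<and> u = v1}"
    have "\<forall>g\<in>Q1p. g \<notin> ?S \<and> am g \<notin> ?S \<and> bm g \<notin> ?S"
      using pinched_incidences no_pinch_at_kronecker by fastforce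
    then have "restrict_hd ?S x \<in> J" using restrict_hd_in_J assms(1) by blast
    then show ?thesis using 2 p by (simp add: kron_ldiv_kmul_arrow_left J_ksmult)
  next
    case (3 a b ps)
    then have "is_path Q (arrs Q) (u, b # ps)" using assms(3) p is_path_ConsD[of Q _ u a] by simp
    then show ?thesis using assms(1) 3 p
      by (simp add: kron_ldiv_kmul_path_left J_kzero J_ksmult J_kmul_left)
  qed
qed

lemma kron_ldiv_in_J: "y \<in> J \<Longrightarrow> kron_ldiv y \<in> J"
  unfolding Lambda_ideal_def
proof (induction rule: ideal_gen.induct)
  case ig_zero
  have "kron_ldiv kzero = kzero" by (auto simp: kron_ldiv_def kzero_def)
  then show ?case by (simp add: ideal_gen.ig_zero)
next
  case (ig_gen x)
  then show ?case by (simp add: kron_ldiv_pinched_rel ideal_gen.ig_zero)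
next
  case (ig_add x y)
  have "kron_ldiv (kadd x y) = kadd (kron_ldiv x) (kron_ldiv y)"
    by (auto simp: kron_ldiv_def kadd_def algebra_simps)
  then show ?case using ig_add by (simp add: ideal_gen.ig_add)
next
  case (ig_smult x c)
  have "kron_ldiv (ksmult c x) = ksmult c (kron_ldiv x)" by (auto simp: kron_ldiv_def ksmult_def)
  then show ?case using ig_smult by (simp add: ideal_gen.ig_smult)
next
  case (ig_left x p)
  then show ?case using kron_ldiv_kmul_delta_left_in_J unfolding Lambda_ideal_def by blast
next
  case (ig_right x p)
  then have "\<And>w. x (w, []) = 0" "\<And>w. x (w, [\<alpha>]) = 0" "\<And>w. x (w, [\<beta>]) = 0"
    using J_vanishes_trivial J_vanishes_kronecker_arrow unfolding Lambda_ideal_def by blast+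
  then show ?case using ig_right by (simp add: kron_ldiv_kmul_right ideal_gen.ig_right)
qed

lemma kron_ldiv_kmul_kron_elt:
  assumes f: "hom_elt Q deg i v1 m f" and i: "i \<noteq> v1"
  shows "kron_ldiv (kmul Q kron_elt f) = f"
proof
  fix r :: "('v,'a) path"
  obtain w l where r: "r = (w, l)" by fastforce
  show "kron_ldiv (kmul Q kron_elt f) r = f r"
  proof (cases "l \<noteq> [] \<and> tgt Q (hd l) = v1")
    case True
    then show ?thesis using r coeff_kron_nonzero[OF kron_after_cases]
      by (cases l) (auto simp: ptgt_def)
  next
    case False
    have "f r = 0"
    proof (rule ccontr)
      assume "f r \<noteq> 0"
      then have "fst r = i" "ptgt Q r = v1" using hom_eltD[OF f] by auto
      then show False using False i r by (auto simp: ptgt_def split: if_splits)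
    qed
    then show ?thesis using False r by (cases l) auto
  qed
qed

lemma hom_elt_kron_ldiv:
  assumes f: "hom_elt Q deg i v2 (m + deg \<alpha>) f"
  shows "hom_elt Q deg i v1 m (kron_ldiv f)"
proof -
  have supp: "supp (kron_ldiv f) \<subseteq> (\<lambda>r. (fst r, tl (snd r))) ` supp f"
  proof
    fix r assume "r \<in> supp (kron_ldiv f)"
    then have "snd r \<noteq> []" "f (fst r, kron_after (hd (snd r)) # snd r) \<noteq> 0"
      by (auto simp: supp_def kron_ldiv_def split: if_splits)
    then show "r \<in> (\<lambda>r. (fst r, tl (snd r))) ` supp f"
      by (intro image_eqI[of _ _ "(fst r, kron_after (hd (snd r)) # snd r)"]) (auto simp: supp_def)
  qed
  have "is_path Q (arrs Q) r \<and> fst r = i \<and> ptgt Q r = v1 \<and> pdeg deg r = m"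
    if r: "r \<in> supp (kron_ldiv f)" for r
  proof -
    have h: "snd r \<noteq> []" "tgt Q (hd (snd r)) = v1" "f (fst r, kron_after (hd (snd r)) # snd r) \<noteq> 0"
      using r by (auto simp: supp_def kron_ldiv_def split: if_splits)
    have p: "is_path Q (arrs Q) (fst r, kron_after (hd (snd r)) # snd r)" "fst r = i"
      "pdeg deg (fst r, kron_after (hd (snd r)) # snd r) = m + deg \<alpha>"
      using hom_eltD[OF f h(3)] by auto
    have "is_path Q (arrs Q) r" using is_path_ConsD[OF p(1)] by simp
    then show ?thesis using p h by (auto simp: ptgt_def pdeg_def)
  qed
  moreover have "finite (supp (kron_ldiv f))"
    using f finite_surj[OF _ supp] by (simp add: hom_elt_def)
  ultimately show ?thesis by (simp add: hom_elt_def)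
qed

lemma kmul_kron_elt_kron_ldiv_after:
  "tgt Q c = v1 \<Longrightarrow> kmul Q kron_elt (kron_ldiv f) (w, kron_after c # c # t) = f (w, kron_after c # c # t)"
  using coeff_kron_nonzero[OF kron_after_cases] by (simp add: ptgt_def)

lemma kron_ldiv_residue_support:
  assumes f: "hom_elt Q deg i v2 n f" and i: "i \<noteq> v1" "i \<noteq> v2"
    and r: "ksub (kmul Q kron_elt (kron_ldiv f)) f r \<noteq> 0"
  obtains w x c t where "r = (w, x # c # t)" "x = \<alpha> \<or> x = \<beta>" "tgt Q c = v1"
    "is_path Q (arrs Q) (w, c # t)" "x \<noteq> kron_after c"
proof -
  obtain w l where r_eq: "r = (w, l)" by fastforce
  have "\<exists>x c t. l = x # c # t \<and> (x = \<alpha> \<or> x = \<beta>) \<and> tgt Q c = v1 \<and> is_path Q (arrs Q) (w, c # t)"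
  proof (cases "f r = 0")
    case False
    then have p: "is_path Q (arrs Q) (w, l)" "w = i" "ptgt Q (w, l) = v2"
      using hom_eltD[OF f] r_eq by auto
    then obtain x c t where "l = x # c # t" "x = \<alpha> \<or> x = \<beta>" "tgt Q c = v1"
      using path_into_v2_shape i by blast
    moreover have "is_path Q (arrs Q) (w, c # t)"
      using p(1) calculation(1) is_path_ConsD[of Q "arrs Q" w x "c # t"] by simp
    ultimately show ?thesis by blast
  next
    case True
    then have kmul: "kmul Q kron_elt (kron_ldiv f) (w, l) \<noteq> 0" using r r_eq by (simp add: ksub_def)
    then obtain x l' where l: "l = x # l'" by (cases l) auto
    then have nz: "coeff_kron x \<noteq> 0" "kron_ldiv f (w, l') \<noteq> 0" using kmul by (auto split: if_splits)
    then obtain c t where "l' = c # t" "tgt Q c = v1" "f (w, kron_after c # c # t) \<noteq> 0"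
      by (cases l') (auto split: if_splits)
    then have "l = x # c # t" "coeff_kron x \<noteq> 0" "tgt Q c = v1" "f (w, kron_after c # c # t) \<noteq> 0"
      using l nz by auto
    moreover have "is_path Q (arrs Q) (w, c # t)"
      using hom_eltD[OF f calculation(4)] is_path_ConsD[of Q "arrs Q" w "kron_after c" "c # t"] by blast
    ultimately show ?thesis using coeff_kron_nonzeroD by blast
  qed
  then obtain x c t where xct: "l = x # c # t" "x = \<alpha> \<or> x = \<beta>" "tgt Q c = v1"
      "is_path Q (arrs Q) (w, c # t)" by blast
  moreover have "x \<noteq> kron_after c"
    using r r_eq xct kmul_kron_elt_kron_ldiv_after[of c f w t] by (auto simp: ksub_def)
  ultimately show ?thesis using that r_eq by blast
qed

lemma kmul_kron_elt_kron_ldiv: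
  assumes f: "hom_elt Q deg i v2 n f" and i: "i \<noteq> v1" "i \<noteq> v2"
  shows "ksub (kmul Q kron_elt (kron_ldiv f)) f \<in> J"
  unfolding Lambda_ideal_def
proof (rule ideal_gen_if_deltas)
  let ?E = "ksub (kmul Q kron_elt (kron_ldiv f)) f"
  have "hom_elt Q deg i v1 (n - deg \<alpha>) (kron_ldiv f)" using f by (intro hom_elt_kron_ldiv) simp
  then have "finite (supp (kron_ldiv f))" by (simp add: hom_elt_def)
  then have "finite (supp (kmul Q kron_elt (kron_ldiv f)))"
    by (rule finite_supp_kmul[OF finite_supp_kron_elt])
  then have "finite (supp (kmul Q kron_elt (kron_ldiv f)) \<union> supp f)" using f by (simp add: hom_elt_def)
  moreover have "supp ?E \<subseteq> supp (kmul Q kron_elt (kron_ldiv f)) \<union> supp f"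
    by (auto simp: supp_def ksub_def)
  ultimately show "finite (supp ?E)" by (rule finite_subset[rotated])
  show "\<forall>r\<in>supp ?E. delta r \<in> ideal_gen Q (pinched_rels Q Q1p Ig ap am bp bm)"
  proof
    fix r assume "r \<in> supp ?E"
    then have "?E r \<noteq> 0" by (simp add: supp_def)
    then obtain w x c t where r: "r = (w, x # c # t)" and x: "x = \<alpha> \<or> x = \<beta>" "x \<noteq> kron_after c"
      and c: "tgt Q c = v1" and p: "is_path Q (arrs Q) (w, c # t)"
      by (rule kron_ldiv_residue_support[OF f i])
    have "c \<in> Q1g" using c p arrow_at_kronecker_in_Q1g by (simp add: is_path_def)
    then have "(src Q c, [x, c]) \<in> Ig" using c x by (intro relation_unless_kron_after)
    then have "delta (w, x # c # t) \<in> J" using p by (intro delta_in_J_of_relation_prefix)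
    then show "delta r \<in> ideal_gen Q (pinched_rels Q Q1p Ig ap am bp bm)"
      using r by (simp add: Lambda_ideal_def)
  qed
qed

section \<open>Dividing by \<open>\<alpha> + \<mu>\<beta>\<close> on the right\<close>

definition kron_rdiv :: "('v,'a,'k) kq \<Rightarrow> ('v,'a,'k) kq" where
  "kron_rdiv y = (\<lambda>r. if snd r \<noteq> [] \<and> fst r = v2 \<and> src Q (last (snd r)) = v2
      then inverse (coeff_kron (kron_before (last (snd r)))) * y (v1, snd r @ [kron_before (last (snd r))])
      else 0)"

lemma kron_rdiv_Nil [simp]: "kron_rdiv y (w, []) = 0"
  and kron_rdiv_snoc [simp]: "kron_rdiv y (w, t @ [c]) =
    (if w = v2 \<and> src Q c = v2 then inverse (coeff_kron (kron_before c)) * y (v1, t @ [c, kron_before c])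
     else 0)"
  by (simp_all add: kron_rdiv_def)

lemma kron_rdiv_pinched_rel:
  assumes "x \<in> pinched_rels Q Q1p Ig ap am bp bm"
  shows "kron_rdiv x = kzero"
proof
  fix r :: "('v,'a) path"
  obtain w l where r: "r = (w, l)" by fastforce
  have "x (v1, t @ [c, kron_before c]) = 0" if c: "src Q c = v2" for c t
    using assms
  proof (cases rule: pinched_rels_cases)
    case (gentle p)
    show ?thesis
    proof (rule ccontr)
      assume "x (v1, t @ [c, kron_before c]) \<noteq> 0"
      then have "p = (v1, t @ [c, kron_before c])" using gentle by (auto simp: delta_def split: if_splits)
      then have "p = (v1, [c, kron_before c])" using relation_is_path[OF gentle(1)] by auto
      then show False using kron_before_not_relation[OF c] gentle(1) by simp
    qed
  qed (use kronecker_arrow_not_pinched[OF kron_before_cases] in \<open>auto simp: delta_def kadd_def ksub_def\<close>)+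
  then show "kron_rdiv x r = kzero r" using r by (cases l rule: rev_cases) (auto simp: kzero_def)
qed

lemma kron_rdiv_kmul_left:
  assumes short: "\<And>w. x (w, []) = 0" "\<And>w. x (w, [\<alpha>]) = 0" "\<And>w. x (w, [\<beta>]) = 0"
  shows "kron_rdiv (kmul Q (delta p) x) = kmul Q (delta p) (kron_rdiv x)"
proof
  fix r :: "('v,'a) path"
  show "kron_rdiv (kmul Q (delta p) x) r = kmul Q (delta p) (kron_rdiv x) r"
  proof (cases "snd r \<noteq> [] \<and> fst r = v2 \<and> src Q (last (snd r)) = v2")
    case False
    have "\<not> (is_left_factor Q p r \<and> snd (left_cofactor p r) \<noteq> [] \<and> fst (left_cofactor p r) = v2
        \<and> src Q (last (snd (left_cofactor p r))) = v2)"
      using False by (auto simp: is_left_factor_def left_cofactor_def)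
    then show ?thesis using False by (auto simp: kron_rdiv_def kmul_delta_left)
  next
    case True
    define t where "t = snd r"
    define c where "c = last t"
    let ?s = "kron_before c"
    define m where "m = length (snd p)"
    consider "m < length t" | "length t \<le> m" by linarith
    then show ?thesis
    proof cases
      case 1
      have "drop m (t @ [?s]) = drop m t @ [?s]" "drop m t \<noteq> []" "last (drop m t) = c"
        using 1 by (auto simp: c_def)
      moreover have "ptgt Q (v1, drop m t @ [?s]) = ptgt Q (fst r, drop m t)"
        using calculation(2) by (simp add: ptgt_def)
      ultimately show ?thesis using True
        by (auto simp: kron_rdiv_def kmul_delta_left is_left_factor_def left_cofactor_def m_def t_def c_def)
    next
      case 2
      have "drop m (t @ [?s]) = [] \<or> drop m (t @ [?s]) = [?s]" using 2 by (cases "m = length t") auto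
      then have "x (left_cofactor p (v1, t @ [?s])) = 0"
        using short kron_before_cases[of c] by (auto simp: left_cofactor_def m_def)
      moreover have "snd (left_cofactor p r) = []" using 2 by (simp add: left_cofactor_def m_def t_def)
      ultimately show ?thesis using True by (auto simp: kron_rdiv_def kmul_delta_left t_def c_def)
    qed
  qed
qed

lemma kron_rdiv_kmul_trivial_right:
  "kron_rdiv (kmul Q x (delta (u, []))) = (if u = v1 then kron_rdiv x else kzero)"
proof
  fix r :: "('v,'a) path"
  obtain w l where "r = (w, l)" by fastforce
  then show "kron_rdiv (kmul Q x (delta (u, []))) r = (if u = v1 then kron_rdiv x else kzero) r"
    by (cases l rule: rev_cases) (auto simp: kmul_delta_right kzero_def)
qed

lemma kron_rdiv_kmul_arrow_right:
  "kron_rdiv (kmul Q x (delta (u, [a]))) = ksmult (inverse (coeff_kron a))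
     (restrict_last {c. src Q c = v2 \<and> kron_before c = a \<and> u = v1} (kmul Q x (delta (v2, []))))"
proof
  fix r :: "('v,'a) path"
  obtain w l where "r = (w, l)" by fastforce
  then show "kron_rdiv (kmul Q x (delta (u, [a]))) r = ksmult (inverse (coeff_kron a))
     (restrict_last {c. src Q c = v2 \<and> kron_before c = a \<and> u = v1} (kmul Q x (delta (v2, [])))) r"
    by (cases l rule: rev_cases; cases "u = v1") (auto simp: kmul_delta_right restrict_last_def ksmult_def)
qed

lemma kron_rdiv_kmul_path_right:
  "kron_rdiv (kmul Q x (delta (u, qs @ [b, a]))) =
     (if u = v1 \<and> src Q b = v2 \<and> kron_before b = a
      then ksmult (inverse (coeff_kron a)) (kmul Q x (delta (src Q b, qs @ [b]))) else kzero)"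
proof
  fix r :: "('v,'a) path"
  obtain w l where "r = (w, l)" by fastforce
  then show "kron_rdiv (kmul Q x (delta (u, qs @ [b, a]))) r =
     (if u = v1 \<and> src Q b = v2 \<and> kron_before b = a
      then ksmult (inverse (coeff_kron a)) (kmul Q x (delta (src Q b, qs @ [b]))) else kzero) r"
    by (cases l rule: rev_cases)
      (auto simp: kmul_delta_right ksmult_def kzero_def is_right_factor_def right_cofactor_def
        ptgt_def hd_append)
qed

lemma kron_rdiv_kmul_delta_right_in_J:
  assumes "x \<in> J" "kron_rdiv x \<in> J" "is_path Q (arrs Q) p"
  shows "kron_rdiv (kmul Q x (delta p)) \<in> J"
proof -
  obtain u l where p: "p = (u, l)" by fastforce
  consider "l = []" | a where "l = [a]" | qs b a where "l = qs @ [b, a]"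
    by (cases l rule: rev_cases; case_tac ys rule: rev_cases) auto
  then show ?thesis
  proof cases
    case 1
    then show ?thesis using assms(2) p by (simp add: kron_rdiv_kmul_trivial_right J_kzero)
  next
    case (2 a)
    let ?S = "{c. src Q c = v2 \<and> kron_before c = a \<and> u = v1}"
    have "\<forall>g\<in>Q1p. g \<notin> ?S \<and> ap g \<notin> ?S \<and> bp g \<notin> ?S"
      using pinched_incidences no_pinch_at_kronecker by fastforce
    moreover have "is_path Q (arrs Q) (v2, [])"
      using arrs_verts[of \<alpha>] kronecker_arrows Q1g_Un_Q1p by (auto simp: is_path_def arrow_chain_def)
    then have "kmul Q x (delta (v2, [])) \<in> J" using assms(1) by (intro J_kmul_right)
    ultimately have "restrict_last ?S (kmul Q x (delta (v2, []))) \<in> J" using restrict_last_in_J by blast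
    then show ?thesis using 2 p by (simp add: kron_rdiv_kmul_arrow_right J_ksmult)
  next
    case (3 qs b a)
    then have "is_path Q (arrs Q) (src Q b, qs @ [b])"
      using assms(3) p is_path_snocD[of u "qs @ [b]" a] by simp
    then have "kmul Q x (delta (src Q b, qs @ [b])) \<in> J" using assms(1) by (intro J_kmul_right)
    moreover have "kron_rdiv (kmul Q x (delta p)) = kzero \<or> kron_rdiv (kmul Q x (delta p))
        = ksmult (inverse (coeff_kron a)) (kmul Q x (delta (src Q b, qs @ [b])))"
      using 3 p by (simp add: kron_rdiv_kmul_path_right)
    ultimately show ?thesis using J_kzero J_ksmult by metis
  qed
qed

lemma kron_rdiv_in_J: "y \<in> J \<Longrightarrow> kron_rdiv y \<in> J"
  unfolding Lambda_ideal_def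
proof (induction rule: ideal_gen.induct)
  case ig_zero
  have "kron_rdiv kzero = kzero" by (auto simp: kron_rdiv_def kzero_def)
  then show ?case by (simp add: ideal_gen.ig_zero)
next
  case (ig_gen x)
  then show ?case by (simp add: kron_rdiv_pinched_rel ideal_gen.ig_zero)
next
  case (ig_add x y)
  have "kron_rdiv (kadd x y) = kadd (kron_rdiv x) (kron_rdiv y)"
    by (auto simp: kron_rdiv_def kadd_def algebra_simps)
  then show ?case using ig_add by (simp add: ideal_gen.ig_add)
next
  case (ig_smult x c)
  have "kron_rdiv (ksmult c x) = ksmult c (kron_rdiv x)" by (auto simp: kron_rdiv_def ksmult_def)
  then show ?case using ig_smult by (simp add: ideal_gen.ig_smult)
next
  case (ig_left x p)
  then have "\<And>w. x (w, []) = 0" "\<And>w. x (w, [\<alpha>]) = 0" "\<And>w. x (w, [\<beta>]) = 0"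
    using J_vanishes_trivial J_vanishes_kronecker_arrow unfolding Lambda_ideal_def by blast+
  then show ?case using ig_left by (simp add: kron_rdiv_kmul_left ideal_gen.ig_left)
next
  case (ig_right x p)
  then show ?case using kron_rdiv_kmul_delta_right_in_J unfolding Lambda_ideal_def by blast
qed

lemma kron_rdiv_kmul_kron_elt:
  assumes f: "hom_elt Q deg v2 i m f" and i: "i \<noteq> v2"
  shows "kron_rdiv (kmul Q f kron_elt) = f"
proof
  fix r :: "('v,'a) path"
  obtain w l where r: "r = (w, l)" by fastforce
  have "f r = 0" if "\<not> (l \<noteq> [] \<and> w = v2 \<and> src Q (last l) = v2)"
  proof (rule ccontr)
    assume "f r \<noteq> 0"
    then have "is_path Q (arrs Q) r" "fst r = v2" "ptgt Q r = i" using hom_eltD[OF f] by auto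
    then show False using that i r by (auto simp: ptgt_def is_path_def split: if_splits)
  qed
  then show "kron_rdiv (kmul Q f kron_elt) r = f r"
    using r coeff_kron_nonzero[OF kron_before_cases] by (cases l rule: rev_cases) auto
qed

lemma hom_elt_kron_rdiv:
  assumes f: "hom_elt Q deg v1 i (m + deg \<alpha>) f"
  shows "hom_elt Q deg v2 i m (kron_rdiv f)"
proof -
  have supp: "supp (kron_rdiv f) \<subseteq> (\<lambda>r. (v2, butlast (snd r))) ` supp f"
  proof
    fix r assume "r \<in> supp (kron_rdiv f)"
    then have "snd r \<noteq> []" "fst r = v2" "f (v1, snd r @ [kron_before (last (snd r))]) \<noteq> 0"
      by (auto simp: supp_def kron_rdiv_def split: if_splits)
    then show "r \<in> (\<lambda>r. (v2, butlast (snd r))) ` supp f"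
      by (intro image_eqI[of _ _ "(v1, snd r @ [kron_before (last (snd r))])"])
        (auto simp: supp_def intro: prod_eqI)
  qed
  have "is_path Q (arrs Q) r \<and> fst r = v2 \<and> ptgt Q r = i \<and> pdeg deg r = m"
    if r: "r \<in> supp (kron_rdiv f)" for r
  proof -
    have h: "snd r \<noteq> []" "fst r = v2" "src Q (last (snd r)) = v2"
      "f (v1, snd r @ [kron_before (last (snd r))]) \<noteq> 0"
      using r by (auto simp: supp_def kron_rdiv_def split: if_splits)
    have p: "is_path Q (arrs Q) (v1, snd r @ [kron_before (last (snd r))])"
      "ptgt Q (v1, snd r @ [kron_before (last (snd r))]) = i"
      "pdeg deg (v1, snd r @ [kron_before (last (snd r))]) = m + deg \<alpha>"
      using hom_eltD[OF f h(4)] by auto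
    have "is_path Q (arrs Q) r" using is_path_snocD[OF p(1) h(1)] h(2,3) by (cases r) simp
    then show ?thesis using p h by (simp add: ptgt_def pdeg_def)
  qed
  moreover have "finite (supp (kron_rdiv f))"
    using f finite_surj[OF _ supp] by (simp add: hom_elt_def)
  ultimately show ?thesis by (simp add: hom_elt_def)
qed

lemma kmul_kron_rdiv_kron_elt_before:
  "src Q c = v2 \<Longrightarrow>
     kmul Q (kron_rdiv f) kron_elt (v1, t @ [c, kron_before c]) = f (v1, t @ [c, kron_before c])"
  using coeff_kron_nonzero[OF kron_before_cases] by simp

lemma kron_rdiv_residue_support:
  assumes f: "hom_elt Q deg v1 i n f" and i: "i \<noteq> v1" "i \<noteq> v2"
    and r: "ksub (kmul Q (kron_rdiv f) kron_elt) f r \<noteq> 0"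
  obtains t c x where "r = (v1, t @ [c, x])" "x = \<alpha> \<or> x = \<beta>" "src Q c = v2"
    "is_path Q (arrs Q) (tgt Q c, t)" "c \<in> arrs Q" "x \<noteq> kron_before c"
proof -
  obtain w l where r_eq: "r = (w, l)" by fastforce
  have prefix: "is_path Q (arrs Q) (tgt Q c, t) \<and> c \<in> arrs Q" if "is_path Q (arrs Q) (v1, t @ [c, x])"
    for t c x
    using that is_path_snocD[of v1 "t @ [c]" x] is_path_butlastD[of "src Q c" t c]
    by (simp add: is_path_def)
  have "\<exists>t c x. r = (v1, t @ [c, x]) \<and> (x = \<alpha> \<or> x = \<beta>) \<and> src Q c = v2
      \<and> is_path Q (arrs Q) (tgt Q c, t) \<and> c \<in> arrs Q"
  proof (cases "f r = 0")
    case False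
    then have p: "is_path Q (arrs Q) (v1, l)" "w = v1" "ptgt Q (v1, l) = i"
      using hom_eltD[OF f] r_eq by auto
    then obtain t c x where "l = t @ [c, x]" "x = \<alpha> \<or> x = \<beta>" "src Q c = v2"
      using path_from_v1_shape i by metis
    then show ?thesis using p prefix r_eq by blast
  next
    case True
    then have kmul: "kmul Q (kron_rdiv f) kron_elt (w, l) \<noteq> 0" using r r_eq by (simp add: ksub_def)
    then obtain l' x where l: "l = l' @ [x]" by (cases l rule: rev_cases) auto
    then have nz: "w = v1" "coeff_kron x \<noteq> 0" "kron_rdiv f (v2, l') \<noteq> 0"
      using kmul by (auto split: if_splits)
    then obtain t c where "l' = t @ [c]" "src Q c = v2" "f (v1, t @ [c, kron_before c]) \<noteq> 0"
      by (cases l' rule: rev_cases) (auto split: if_splits)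
    moreover have "is_path Q (arrs Q) (tgt Q c, t) \<and> c \<in> arrs Q"
      using hom_eltD[OF f calculation(3)] prefix by blast
    ultimately show ?thesis using l nz r_eq coeff_kron_nonzeroD by auto
  qed
  then obtain t c x where txc: "r = (v1, t @ [c, x])" "x = \<alpha> \<or> x = \<beta>" "src Q c = v2"
      "is_path Q (arrs Q) (tgt Q c, t)" "c \<in> arrs Q" by blast
  moreover have "x \<noteq> kron_before c"
    using r txc kmul_kron_rdiv_kron_elt_before[of c f t] by (auto simp: ksub_def)
  ultimately show ?thesis using that by blast
qed

lemma kmul_kron_rdiv_kron_elt:
  assumes f: "hom_elt Q deg v1 i n f" and i: "i \<noteq> v1" "i \<noteq> v2"
  shows "ksub (kmul Q (kron_rdiv f) kron_elt) f \<in> J"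
  unfolding Lambda_ideal_def
proof (rule ideal_gen_if_deltas)
  let ?E = "ksub (kmul Q (kron_rdiv f) kron_elt) f"
  have "hom_elt Q deg v2 i (n - deg \<alpha>) (kron_rdiv f)" using f by (intro hom_elt_kron_rdiv) simp
  then have "finite (supp (kron_rdiv f))" by (simp add: hom_elt_def)
  then have "finite (supp (kmul Q (kron_rdiv f) kron_elt))"
    by (rule finite_supp_kmul[OF _ finite_supp_kron_elt])
  then have "finite (supp (kmul Q (kron_rdiv f) kron_elt) \<union> supp f)" using f by (simp add: hom_elt_def)
  moreover have "supp ?E \<subseteq> supp (kmul Q (kron_rdiv f) kron_elt) \<union> supp f"
    by (auto simp: supp_def ksub_def)
  ultimately show "finite (supp ?E)" by (rule finite_subset[rotated])
  show "\<forall>r\<in>supp ?E. delta r \<in> ideal_gen Q (pinched_rels Q Q1p Ig ap am bp bm)"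
  proof
    fix r assume "r \<in> supp ?E"
    then have "?E r \<noteq> 0" by (simp add: supp_def)
    then obtain t c x where r: "r = (v1, t @ [c, x])" and x: "x = \<alpha> \<or> x = \<beta>" "x \<noteq> kron_before c"
      and c: "src Q c = v2" and p: "is_path Q (arrs Q) (tgt Q c, t)" and "c \<in> arrs Q"
      by (rule kron_rdiv_residue_support[OF f i])
    then have "c \<in> Q1g" using c arrow_at_kronecker_in_Q1g by simp
    then have "(v1, [c, x]) \<in> Ig" using c x by (intro relation_unless_kron_before)
    then have "delta (v1, t @ [c, x]) \<in> J" using p by (intro delta_in_J_of_relation_suffix)
    then show "delta r \<in> ideal_gen Q (pinched_rels Q Q1p Ig ap am bp bm)"
      using r by (simp add: Lambda_ideal_def)
  qed
qed

section \<open>The Hom complexes\<close>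

lemma kron_elt_left_injective:
  assumes "hom_elt Q deg i v1 m f" "i \<noteq> v1" "kmul Q kron_elt f \<in> J"
  shows "f \<in> J"
  using kron_ldiv_in_J[OF assms(3)] kron_ldiv_kmul_kron_elt[OF assms(1,2)] by simp

lemma kron_elt_right_injective:
  assumes "hom_elt Q deg v2 i m f" "i \<noteq> v2" "kmul Q f kron_elt \<in> J"
  shows "f \<in> J"
  using kron_rdiv_in_J[OF assms(3)] kron_rdiv_kmul_kron_elt[OF assms(1,2)] by simp

lemma kmul_ksmult_kron_elt: "kmul Q (ksmult c h) kron_elt = ksmult c (kmul Q h kron_elt)"
proof
  fix r :: "('v,'a) path"
  obtain w l where "r = (w, l)" by fastforce
  then show "kmul Q (ksmult c h) kron_elt r = ksmult c (kmul Q h kron_elt) r"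
    by (cases l rule: rev_cases) (auto simp: ksmult_def)
qed

abbreviation B :: "('v,'a,'k) twc" where
  "B \<equiv> Bobj deg \<alpha> \<beta> \<mu> v1 v2"

lemma Bobj_eq: "B = ([(v2, deg \<alpha>), (v1, 1)], \<lambda>k l. if k = 0 \<and> l = 1 then kron_elt else kzero)"
  unfolding Bobj_def kron_elt_def by simp

lemma is_mor_Pobj_Bobj:
  "is_mor Q deg n (Pobj i) B f \<longleftrightarrow>
     hom_elt Q deg i v2 (n + deg \<alpha>) (f 0 0) \<and> hom_elt Q deg i v1 (n + 1) (f 1 0)"
  by (auto simp: is_mor_def Bobj_eq Pobj_def less_Suc_eq numeral_2_eq_2)

lemma is_mor_Bobj_Pobj:
  "is_mor Q deg n B (Pobj i) f \<longleftrightarrow>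
     hom_elt Q deg v2 i (n - deg \<alpha>) (f 0 0) \<and> hom_elt Q deg v1 i (n - 1) (f 0 1)"
  by (auto simp: is_mor_def Bobj_eq Pobj_def less_Suc_eq numeral_2_eq_2)

lemma mor_eq_Pobj_Bobj:
  "mor_eq J (Pobj i) B h f \<longleftrightarrow> ksub (h 0 0) (f 0 0) \<in> J \<and> ksub (h 1 0) (f 1 0) \<in> J"
  by (auto simp: mor_eq_def Bobj_eq Pobj_def less_Suc_eq numeral_2_eq_2)

lemma mor_eq_Bobj_Pobj:
  "mor_eq J B (Pobj i) h f \<longleftrightarrow> ksub (h 0 0) (f 0 0) \<in> J \<and> ksub (h 0 1) (f 0 1) \<in> J"
  by (auto simp: mor_eq_def Bobj_eq Pobj_def less_Suc_eq numeral_2_eq_2)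

lemma dmor_Pobj_Bobj:
  "dmor Q n (Pobj i) B g 0 0 = kmul Q kron_elt (g 1 0)"
  "dmor Q n (Pobj i) B g 1 0 = (\<lambda>r. 0)"
  by (rule ext, simp add: dmor_def Bobj_eq Pobj_def numeral_2_eq_2)+

lemma dmor_Bobj_Pobj:
  "dmor Q n B (Pobj i) g 0 0 = (\<lambda>r. 0)"
  "dmor Q n B (Pobj i) g 0 1 = ksmult (- ((-1) ^ nat \<bar>n\<bar>)) (kmul Q (g 0 0) kron_elt)"
  by (rule ext, simp add: dmor_def Bobj_eq Pobj_def numeral_2_eq_2 ksmult_def)+

lemma hom_acyclic_Pobj_Bobj:
  assumes i: "i \<noteq> v1" "i \<noteq> v2"
  shows "hom_acyclic Q deg J (Pobj i) B"
  unfolding hom_acyclic_def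
proof (intro allI impI, elim conjE)
  fix n f
  assume "is_mor Q deg n (Pobj i) B f" and cycle: "mor_eq J (Pobj i) B (dmor Q n (Pobj i) B f) (\<lambda>_ _. kzero)"
  then have f00: "hom_elt Q deg i v2 (n + deg \<alpha>) (f 0 0)" and f10: "hom_elt Q deg i v1 (n + 1) (f 1 0)"
    by (simp_all add: is_mor_Pobj_Bobj)
  have "f 1 0 \<in> J"
    using cycle kron_elt_left_injective[OF f10 i(1)] by (simp add: mor_eq_Pobj_Bobj dmor_Pobj_Bobj)
  define g :: "nat \<Rightarrow> nat \<Rightarrow> ('v,'a,'k) kq" where "g k l = (if k = 1 then kron_ldiv (f 0 0) else kzero)" for k l
  have "is_mor Q deg (n - 1) (Pobj i) B g"
    using hom_elt_kron_ldiv[OF f00] by (simp add: is_mor_Pobj_Bobj g_def hom_elt_kzero)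
  moreover have "mor_eq J (Pobj i) B (dmor Q (n - 1) (Pobj i) B g) f"
    unfolding mor_eq_Pobj_Bobj dmor_Pobj_Bobj
    using kmul_kron_elt_kron_ldiv[OF f00 i] J_neg[OF \<open>f 1 0 \<in> J\<close>] by (simp add: g_def)
  ultimately show "\<exists>g. is_mor Q deg (n - 1) (Pobj i) B g \<and> mor_eq J (Pobj i) B (dmor Q (n - 1) (Pobj i) B g) f"
    by blast
qed

lemma hom_acyclic_Bobj_Pobj:
  assumes i: "i \<noteq> v1" "i \<noteq> v2"
  shows "hom_acyclic Q deg J B (Pobj i)"
  unfolding hom_acyclic_def
proof (intro allI impI, elim conjE)
  fix n f
  assume "is_mor Q deg n B (Pobj i) f" and cycle: "mor_eq J B (Pobj i) (dmor Q n B (Pobj i) f) (\<lambda>_ _. kzero)"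
  then have f00: "hom_elt Q deg v2 i (n - deg \<alpha>) (f 0 0)" and f01: "hom_elt Q deg v1 i (n - 1) (f 0 1)"
    by (simp_all add: is_mor_Bobj_Pobj)
  have "ksmult (- ((-1) ^ nat \<bar>n\<bar>)) (kmul Q (f 0 0) kron_elt) \<in> J"
    using cycle unfolding mor_eq_Bobj_Pobj dmor_Bobj_Pobj by simp
  then have "kmul Q (f 0 0) kron_elt \<in> J" by (simp add: J_ksmult_iff)
  then have "f 0 0 \<in> J" by (rule kron_elt_right_injective[OF f00 i(2)])
  define s :: 'k where "s = - ((-1) ^ nat \<bar>n - 1\<bar>)"
  define g :: "nat \<Rightarrow> nat \<Rightarrow> ('v,'a,'k) kq"
    where "g k l = (if l = 0 then ksmult s (kron_rdiv (f 0 1)) else kzero)" for k l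
  have "hom_elt Q deg v2 i (n - 1 - deg \<alpha>) (kron_rdiv (f 0 1))" using f01 by (intro hom_elt_kron_rdiv) simp
  then have "is_mor Q deg (n - 1) B (Pobj i) g"
    by (simp add: is_mor_Bobj_Pobj g_def hom_elt_ksmult hom_elt_kzero)
  moreover have "ksub (dmor Q (n - 1) B (Pobj i) g 0 1) (f 0 1) = ksub (kmul Q (kron_rdiv (f 0 1)) kron_elt) (f 0 1)"
  proof -
    have g00: "g 0 0 = ksmult s (kron_rdiv (f 0 1))" by (simp add: g_def)
    show ?thesis unfolding dmor_Bobj_Pobj g00 kmul_ksmult_kron_elt
      by (intro ext) (simp add: ksub_def ksmult_def s_def)
  qed
  then have "mor_eq J B (Pobj i) (dmor Q (n - 1) B (Pobj i) g) f"
    unfolding mor_eq_Bobj_Pobj dmor_Bobj_Pobj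
    using J_neg[OF \<open>f 0 0 \<in> J\<close>] kmul_kron_rdiv_kron_elt[OF f01 i] by simp
  ultimately show "\<exists>g. is_mor Q deg (n - 1) B (Pobj i) g \<and> mor_eq J B (Pobj i) (dmor Q (n - 1) B (Pobj i) g) f"
    by blast
qed

end

theorem lemma5p6:
  fixes Q :: "('v,'a) quiver" and Q1g Q1p :: "'a set" and Ig :: "('v,'a) path set"
    and deg :: "'a \<Rightarrow> int" and ap am bp bm :: "'a \<Rightarrow> 'a"
    and \<alpha> \<beta> :: 'a and v1 v2 i :: 'v and \<mu> :: "'k::field"
  assumes "graded_pinched_gentle Q Q1g Q1p Ig deg ap am bp bm"
    and "acyclic_graded_kronecker Q Q1g Q1p Ig deg \<alpha> \<beta> v1 v2"
    and "\<mu> \<noteq> 0"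
    and "i \<in> verts Q" and "i \<noteq> v1" and "i \<noteq> v2"
  shows "hom_acyclic Q deg (Lambda_ideal Q Q1p Ig ap am bp bm) (Pobj i) (Bobj deg \<alpha> \<beta> \<mu> v1 v2)
       \<and> hom_acyclic Q deg (Lambda_ideal Q Q1p Ig ap am bp bm) (Bobj deg \<alpha> \<beta> \<mu> v1 v2) (Pobj i)"
proof -
  interpret kronecker Q Q1g Q1p Ig deg ap am bp bm \<alpha> \<beta> v1 v2 \<mu>
    using assms(1-3) by unfold_locales
  show ?thesis using hom_acyclic_Pobj_Bobj hom_acyclic_Bobj_Pobj assms(5,6) by blast
qed

end
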